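(* Let $s$ be a degree sequence and let $G,H\in\mathcal{P}(s)$. Then there exists a sequence of p-switches transforming $G$ into $H$; that is, there are 2-switches $\tau_1,\dots,\tau_k$ ($k\ge0$) such that, with $G_0=G$ and $G_i=\tau_i(G_{i-1})$, each $\tau_i$ is a p-switch over $G_{i-1}$ and $G_k=H$.
   Context: All graphs are finite, simple, undirected and labeled, with vertex set $[n]$. The degree sequence of a graph $G$ with $V(G)=[n]$ is $(d_1,\dots,d_n)$ where $d_i$ is the degree of vertex $i$. A pseudoforest is a graph each of whose connected components contains at most one cycle (i.e. each component is a tree or a unicyclic graph, a unicyclic graph being a connected graph with exactly one cycle). $\mathcal{P}(s)$ is the set of pseudoforests with degree sequence $s$. For $a,b,c,d\in[n]$, the matrix $A=\binom{a\ b}{c\ d}$ is interchangeable in $G$ if $ab,cd\in E(G)$, $\{a,b\}\cap\{c,d\}=\varnothing$ and $ac,bd\notin E(G)$. The 2-switch $\tau_A$ sends $G$ to $G-ab-cd+ac+bd$ if $A$ is interchangeable in $G$, and to $G$ otherwise (then $\tau_A$ is trivial for $G$). A nontrivial 2-switch $\tau$ over a pseudoforest $G$ is a p-switch if $\tau(G)$ is a pseudoforest. The empty sequence is allowed. *)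

theory Defs
  imports Main
begin

text \<open>A labeled simple graph on vertex set [n] = {1..n} is represented by its edge set,
  a set of 2-element subsets of {1..n}.\<close>

type_synonym graph = "nat set set"

definition is_graph :: "nat \<Rightarrow> graph \<Rightarrow> bool" where
  "is_graph n E \<longleftrightarrow> (\<forall>e\<in>E. \<exists>x y. e = {x, y} \<and> x \<noteq> y \<and> x \<in> {1..n} \<and> y \<in> {1..n})"

definition degree :: "graph \<Rightarrow> nat \<Rightarrow> nat" where
  "degree E i = card {j. {i, j} \<in> E}"

definition deg_seq :: "nat \<Rightarrow> graph \<Rightarrow> nat list" where
  "deg_seq n E = map (degree E) [1..<n+1]"

definition adj :: "graph \<Rightarrow> nat \<Rightarrow> nat \<Rightarrow> bool" where
  "adj E x y \<longleftrightarrow> {x, y} \<in> E"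

definition connected_in :: "graph \<Rightarrow> nat \<Rightarrow> nat \<Rightarrow> bool" where
  "connected_in E x y \<longleftrightarrow> (adj E)\<^sup>*\<^sup>* x y"

definition cycle_edges :: "nat list \<Rightarrow> nat set set" where
  "cycle_edges vs = {{vs ! i, vs ! ((i + 1) mod length vs)} | i. i < length vs}"

definition cycles :: "graph \<Rightarrow> nat set set set" where
  "cycles E = {cycle_edges vs | vs. distinct vs \<and> length vs \<ge> 3 \<and>
      (\<forall>i < length vs. {vs ! i, vs ! ((i + 1) mod length vs)} \<in> E)}"

definition pseudoforest :: "nat \<Rightarrow> graph \<Rightarrow> bool" where
  "pseudoforest n E \<longleftrightarrow> is_graph n E \<and>
     (\<forall>C1\<in>cycles E. \<forall>C2\<in>cycles E.
        (\<exists>x y. x \<in> \<Union>C1 \<and> y \<in> \<Union>C2 \<and> connected_in E x y) \<longrightarrow> C1 = C2)"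

definition Pset :: "nat list \<Rightarrow> graph set" where
  "Pset s = {E. pseudoforest (length s) E \<and> deg_seq (length s) E = s}"

text \<open>A 2-switch is given by the matrix (a b; c d), encoded as (a,b,c,d).\<close>
definition interchangeable :: "graph \<Rightarrow> nat \<times> nat \<times> nat \<times> nat \<Rightarrow> bool" where
  "interchangeable E A = (case A of (a, b, c, d) \<Rightarrow>
     {a, b} \<in> E \<and> {c, d} \<in> E \<and> {a, b} \<inter> {c, d} = {} \<and> {a, c} \<notin> E \<and> {b, d} \<notin> E)"

definition two_switch :: "nat \<times> nat \<times> nat \<times> nat \<Rightarrow> graph \<Rightarrow> graph" where
  "two_switch A E = (case A of (a, b, c, d) \<Rightarrow>
     (if interchangeable E A then (E - {{a, b}, {c, d}}) \<union> {{a, c}, {b, d}} else E))"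

definition p_switch :: "nat \<Rightarrow> graph \<Rightarrow> nat \<times> nat \<times> nat \<times> nat \<Rightarrow> bool" where
  "p_switch n E A \<longleftrightarrow> pseudoforest n E \<and> interchangeable E A \<and> pseudoforest n (two_switch A E)"

end

theory Submission
  imports Defs "HOL-Library.Transitive_Closure_Table"
begin

text \<open>A graph is a pseudoforest iff its edges can be oriented so that every vertex has out-degree
  at most one, and every graph of maximum degree two is a pseudoforest.

  If \<open>G\<close> has a leaf \<open>l\<close>, let \<open>t\<close> be
  the neighbour of \<open>l\<close> in \<open>G\<close> or in \<open>H\<close> of larger degree; at most one p-switch in each graph
  makes \<open>{l, t}\<close> an edge, an orientation of the switched graph certifying that it is a
  pseudoforest. If \<open>G\<close> has no leaf, comparing the degree sum with the out-degree sum of an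
  orientation shows that all degrees are at most two, so every 2-switch is a p-switch, and \<open>G\<close>
  can be switched until some vertex \<open>v\<close> has the same neighbours as in \<open>H\<close>. Either way both
  graphs end up with the same edges at one vertex; removing them, connecting the remainders by
  induction and putting the edges back along the way connects \<open>G\<close> and \<open>H\<close>.\<close>

section \<open>Neighbours, degrees and connectivity\<close>

definition neighbors :: "graph \<Rightarrow> nat \<Rightarrow> nat set" where
  "neighbors E v = {u. {v, u} \<in> E}"

definition incident_edges :: "graph \<Rightarrow> nat \<Rightarrow> graph" where
  "incident_edges E v = {e \<in> E. v \<in> e}"

lemma degree_eq_card_neighbors: "degree E v = card (neighbors E v)"
  by (simp add: degree_def neighbors_def)

lemma neighbors_sym: "u \<in> neighbors E v \<longleftrightarrow> v \<in> neighbors E u"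
  by (simp add: neighbors_def insert_commute)

lemma finite_neighbors: "finite E \<Longrightarrow> finite (neighbors E v)"
proof -
  assume "finite E"
  moreover have "inj_on (\<lambda>u. {v, u}) (neighbors E v)" by (auto simp: inj_on_def doubleton_eq_iff)
  moreover have "(\<lambda>u. {v, u}) ` neighbors E v \<subseteq> E" by (auto simp: neighbors_def)
  ultimately show ?thesis by (meson finite_imageD finite_subset)
qed

lemma is_graph_finite: "is_graph n E \<Longrightarrow> finite E"
  unfolding is_graph_def by (rule finite_subset[of _ "Pow {1..n}"]) auto

lemma is_graph_subset: "F \<subseteq> E \<Longrightarrow> is_graph n E \<Longrightarrow> is_graph n F"
  unfolding is_graph_def by blast

lemma is_graph_insert:
  "is_graph n E \<Longrightarrow> a \<in> {1..n} \<Longrightarrow> b \<in> {1..n} \<Longrightarrow> a \<noteq> b \<Longrightarrow> is_graph n (insert {a, b} E)"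
  unfolding is_graph_def by blast

lemma is_graph_Un: "is_graph n E \<Longrightarrow> is_graph n F \<Longrightarrow> is_graph n (E \<union> F)"
  unfolding is_graph_def by blast

lemma is_graph_edgeD:
  assumes "is_graph n E" and "{x, y} \<in> E"
  shows "x \<noteq> y" and "x \<in> {1..n}" and "y \<in> {1..n}"
  using assms unfolding is_graph_def by (fastforce simp: doubleton_eq_iff)+

lemma is_graph_edge_at:
  assumes "is_graph n E" and "e \<in> E" and "z \<in> e"
  obtains u where "e = {z, u}" and "u \<in> neighbors E z"
proof -
  obtain x y where "e = {x, y}" using assms(1,2) unfolding is_graph_def by blast
  then have "e = {z, if z = x then y else x}" using assms(3) by auto
  then show ?thesis using that assms(2) by (simp add: neighbors_def)
qed

lemma not_in_neighbors_self: "is_graph n E \<Longrightarrow> v \<notin> neighbors E v"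
  using is_graph_edgeD(1)[of n E v v] by (auto simp: neighbors_def)

lemma degree_outside:
  assumes "is_graph n E" and "z \<notin> {1..n}"
  shows "degree E z = 0"
proof -
  have "neighbors E z = {}" using is_graph_edgeD(2)[OF assms(1)] assms(2) by (auto simp: neighbors_def)
  then show ?thesis by (simp add: degree_eq_card_neighbors)
qed

lemma incident_edges_eq_image:
  assumes "is_graph n E"
  shows "incident_edges E v = (\<lambda>u. {v, u}) ` neighbors E v"
proof (intro equalityI subsetI)
  fix e assume "e \<in> incident_edges E v"
  then have "e \<in> E" and "v \<in> e" by (auto simp: incident_edges_def)
  then obtain u where "e = {v, u}" and "u \<in> neighbors E v" using is_graph_edge_at[OF assms] by blast
  then show "e \<in> (\<lambda>u. {v, u}) ` neighbors E v" by blast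
qed (auto simp: incident_edges_def neighbors_def)

lemma card_incident_edges:
  assumes "is_graph n E"
  shows "card (incident_edges E v) = degree E v"
proof -
  have "inj_on (\<lambda>u. {v, u}) (neighbors E v)" by (auto simp: inj_on_def doubleton_eq_iff)
  then show ?thesis
    by (simp add: incident_edges_eq_image[OF assms] card_image degree_eq_card_neighbors)
qed

lemma degree_Un_disjoint:
  assumes "finite K" and "finite S" and "K \<inter> S = {}"
  shows "degree (K \<union> S) z = degree K z + degree S z"
proof -
  have "neighbors (K \<union> S) z = neighbors K z \<union> neighbors S z" by (auto simp: neighbors_def)
  moreover have "neighbors K z \<inter> neighbors S z = {}" using assms(3) by (auto simp: neighbors_def)
  ultimately show ?thesis using assms(1,2) by (simp add: degree_eq_card_neighbors card_Un_disjoint finite_neighbors)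
qed

lemma degree_Diff:
  assumes "finite E" and "S \<subseteq> E"
  shows "degree (E - S) z = degree E z - degree S z"
proof -
  have "degree ((E - S) \<union> S) z = degree (E - S) z + degree S z"
    using assms by (intro degree_Un_disjoint) (auto intro: finite_subset)
  moreover have "(E - S) \<union> S = E" using assms(2) by blast
  ultimately show ?thesis by simp
qed

lemma connected_in_refl: "connected_in E x x"
  by (simp add: connected_in_def)

lemma connected_in_trans: "connected_in E x y \<Longrightarrow> connected_in E y z \<Longrightarrow> connected_in E x z"
  unfolding connected_in_def by simp

lemma connected_in_sym:
  assumes "connected_in E x y"
  shows "connected_in E y x"
proof -
  have sym: "(adj E)\<inverse>\<inverse> = adj E" by (intro ext) (simp add: adj_def insert_commute)
  have "(adj E)\<inverse>\<inverse>\<^sup>*\<^sup>* y x" using assms unfolding connected_in_def by (rule rtranclp_converseI)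
  then show ?thesis unfolding connected_in_def by (simp only: sym)
qed

lemma connected_in_edge: "{x, y} \<in> E \<Longrightarrow> connected_in E x y"
  unfolding connected_in_def adj_def by auto

lemma connected_in_mono:
  assumes "F \<subseteq> E" and "connected_in F x y"
  shows "connected_in E x y"
proof -
  have "adj F \<le> adj E" using assms(1) by (auto simp: adj_def)
  then show ?thesis using assms(2) unfolding connected_in_def by (metis rtranclp_mono predicate2D)
qed

lemma connected_in_isolated: "\<forall>e\<in>E. z \<notin> e \<Longrightarrow> connected_in E z w \<Longrightarrow> w = z"
  unfolding connected_in_def adj_def by (erule converse_rtranclpE) auto

section \<open>Cycles\<close>

lemma Suc_mod_neq_self:
  assumes "1 < (k::nat)"
  shows "Suc i mod k \<noteq> i"
proof -
  consider "Suc i < k" | "Suc i = k" | "k \<le> i" by linarith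
  then show ?thesis
  proof cases
    case 3
    then show ?thesis using mod_less_divisor[of k "Suc i"] assms by linarith
  qed (use assms in auto)
qed

definition is_cycle :: "graph \<Rightarrow> nat list \<Rightarrow> bool" where
  "is_cycle E vs \<longleftrightarrow> distinct vs \<and> 3 \<le> length vs \<and>
     (\<forall>i < length vs. {vs ! i, vs ! ((i + 1) mod length vs)} \<in> E)"

lemma cycles_iff: "C \<in> cycles E \<longleftrightarrow> (\<exists>vs. is_cycle E vs \<and> C = cycle_edges vs)"
  unfolding cycles_def is_cycle_def by (simp add: conj_ac)

lemma cycle_edges_eq_image:
  "cycle_edges vs = (\<lambda>i. {vs ! i, vs ! ((i + 1) mod length vs)}) ` {..<length vs}"
  unfolding cycle_edges_def by auto

lemma cycle_edgesE:
  assumes "e \<in> cycle_edges vs"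
  obtains i where "i < length vs" and "e = {vs ! i, vs ! ((i + 1) mod length vs)}"
  using assms unfolding cycle_edges_eq_image by blast

lemma cycle_edgesI: "i < length vs \<Longrightarrow> {vs ! i, vs ! ((i + 1) mod length vs)} \<in> cycle_edges vs"
  unfolding cycle_edges_eq_image by blast

lemma is_cycle_edges_subset: "is_cycle E vs \<Longrightarrow> cycle_edges vs \<subseteq> E"
  unfolding is_cycle_def by (auto elim!: cycle_edgesE)

lemma cycles_subset: "C \<in> cycles E \<Longrightarrow> C \<subseteq> E"
  unfolding cycles_iff using is_cycle_edges_subset by blast

lemma cycles_mono: "E \<subseteq> E' \<Longrightarrow> cycles E \<subseteq> cycles E'"
  unfolding cycles_def by blast

lemma Union_cycle_edges:
  assumes "is_cycle E vs"
  shows "\<Union>(cycle_edges vs) = set vs"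
proof
  have "vs \<noteq> []" using assms by (auto simp: is_cycle_def)
  then show "\<Union>(cycle_edges vs) \<subseteq> set vs"
    by (auto elim!: cycle_edgesE intro!: nth_mem)
  show "set vs \<subseteq> \<Union>(cycle_edges vs)"
  proof
    fix z assume "z \<in> set vs"
    then obtain i where "i < length vs" and "vs ! i = z" by (meson in_set_conv_nth)
    then show "z \<in> \<Union>(cycle_edges vs)" using cycle_edgesI by blast
  qed
qed

lemma rtranclp_around_cycle:
  assumes "vs \<noteq> []" and step: "\<And>i. i < length vs \<Longrightarrow> R (vs ! i) (vs ! ((i + 1) mod length vs))"
    and "a \<in> set vs" and "b \<in> set vs"
  shows "R\<^sup>*\<^sup>* a b"
proof -
  let ?k = "length vs"
  have walk: "R\<^sup>*\<^sup>* (vs ! i) (vs ! ((i + m) mod ?k))" if "i < ?k" for i m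
  proof (induction m)
    case 0
    then show ?case using that by simp
  next
    case (Suc m)
    have "R (vs ! ((i + m) mod ?k)) (vs ! (((i + m) mod ?k + 1) mod ?k))"
      using step assms(1) by simp
    then show ?case using Suc by (simp add: mod_Suc_eq)
  qed
  obtain i j where "i < ?k" "vs ! i = a" "j < ?k" "vs ! j = b"
    using assms(3,4) by (meson in_set_conv_nth)
  moreover have "(i + (j + ?k - i)) mod ?k = j" using \<open>i < ?k\<close> \<open>j < ?k\<close> by simp
  ultimately show ?thesis using walk[of i "j + ?k - i"] by simp
qed

lemma is_cycle_connected:
  assumes "is_cycle E vs" and "a \<in> set vs" and "b \<in> set vs"
  shows "connected_in E a b"
proof -
  have "vs \<noteq> []" using assms(1) by (auto simp: is_cycle_def)
  moreover have "adj E (vs ! i) (vs ! ((i + 1) mod length vs))" if "i < length vs" for i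
    using assms(1) that by (simp add: is_cycle_def adj_def)
  ultimately show ?thesis
    using rtranclp_around_cycle[of vs "adj E"] assms(2,3) unfolding connected_in_def by blast
qed

lemma is_cycle_edge_inj:
  assumes c: "is_cycle E vs" and i: "i < length vs" and j: "j < length vs"
    and eq: "{vs ! i, vs ! ((i + 1) mod length vs)} = {vs ! j, vs ! ((j + 1) mod length vs)}"
  shows "i = j"
proof (rule ccontr)
  let ?k = "length vs"
  assume "i \<noteq> j"
  have d: "distinct vs" and k: "3 \<le> ?k" using c by (auto simp: is_cycle_def)
  have "0 < ?k" using k by linarith
  then have "(i + 1) mod ?k < ?k" "(j + 1) mod ?k < ?k" by simp_all
  then have "i = (j + 1) mod ?k" and "j = (i + 1) mod ?k"
    using eq \<open>i \<noteq> j\<close> nth_eq_iff_index_eq[OF d] i j by (auto simp: doubleton_eq_iff)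
  then have "(i + 2) mod ?k = i mod ?k" using i by (simp add: mod_Suc_eq)
  then have "?k dvd 2" using mod_eq_dvd_iff_nat[of i "i + 2" ?k] by simp
  then show False using k by (simp add: nat_dvd_not_less)
qed

lemma card_cycle_edges:
  assumes "is_cycle E vs"
  shows "card (cycle_edges vs) = length vs"
proof -
  have "inj_on (\<lambda>i. {vs ! i, vs ! ((i + 1) mod length vs)}) {..<length vs}"
    using is_cycle_edge_inj[OF assms] by (auto simp: inj_on_def)
  then show ?thesis by (simp add: cycle_edges_eq_image card_image)
qed

lemma cycle_through_edge:
  assumes e: "{u, v} \<in> E" and uv: "u \<noteq> v" and conn: "connected_in (E - {{u, v}}) u v"
  shows "\<exists>C\<in>cycles E. {u, v} \<in> C"
proof -
  let ?F = "E - {{u, v}}"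
  obtain ys where p: "rtrancl_path (adj ?F) u ys v" and d: "distinct (u # ys)"
    using conn unfolding connected_in_def rtranclp_eq_rtrancl_path by (metis rtrancl_path_distinct)
  have "ys \<noteq> []" using p uv by (auto elim: rtrancl_path.cases)
  then have last: "last ys = v" using rtrancl_path_last[OF p] by blast
  have "length ys \<noteq> 1"
  proof
    assume "length ys = 1"
    then have "ys = [v]" using last by (cases ys) auto
    then show False using rtrancl_path_nth[OF p, of 0] by (simp add: adj_def)
  qed
  moreover have "length ys \<noteq> 0" using \<open>ys \<noteq> []\<close> by simp
  ultimately have long: "2 \<le> length ys" by linarith
  define vs where "vs = u # ys"
  have vs_last: "vs ! length ys = v" using \<open>ys \<noteq> []\<close> last by (simp add: vs_def last_conv_nth)
  have c: "is_cycle E vs"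
    unfolding is_cycle_def
  proof (intro conjI allI impI)
    show "distinct vs" and "3 \<le> length vs" using d long by (simp_all add: vs_def)
    fix i assume i: "i < length vs"
    show "{vs ! i, vs ! ((i + 1) mod length vs)} \<in> E"
    proof (cases "i < length ys")
      case True
      then show ?thesis using rtrancl_path_nth[OF p True] by (simp add: vs_def adj_def)
    next
      case False
      then have "i = length ys" using i by (simp add: vs_def)
      then show ?thesis using vs_last e by (simp add: vs_def insert_commute)
    qed
  qed
  have "{vs ! length ys, vs ! ((length ys + 1) mod length vs)} \<in> cycle_edges vs"
    by (rule cycle_edgesI) (simp add: vs_def)
  then have "{u, v} \<in> cycle_edges vs" using vs_last by (simp add: vs_def insert_commute)
  then show ?thesis using c cycles_iff by blast
qed

section \<open>Pseudoforests and orientations\<close>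

lemma pseudoforest_subset:
  assumes "F \<subseteq> E" and "pseudoforest n E"
  shows "pseudoforest n F"
  unfolding pseudoforest_def
proof (intro conjI ballI impI)
  show "is_graph n F" using assms is_graph_subset by (auto simp: pseudoforest_def)
  fix C1 C2 assume C: "C1 \<in> cycles F" "C2 \<in> cycles F"
    and "\<exists>x y. x \<in> \<Union>C1 \<and> y \<in> \<Union>C2 \<and> connected_in F x y"
  then obtain x y where xy: "x \<in> \<Union>C1" "y \<in> \<Union>C2" "connected_in F x y" by blast
  have "C1 \<in> cycles E" "C2 \<in> cycles E" using C cycles_mono[OF assms(1)] by blast+
  moreover have "connected_in E x y" using connected_in_mono[OF assms(1) xy(3)] .
  ultimately show "C1 = C2" using assms(2) xy(1,2) unfolding pseudoforest_def by blast
qed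

definition acyclic_component :: "graph \<Rightarrow> nat \<Rightarrow> bool" where
  "acyclic_component E r \<longleftrightarrow> (\<forall>C\<in>cycles E. \<forall>z\<in>\<Union>C. \<not> connected_in E r z)"

lemma acyclic_component_connected:
  assumes "acyclic_component E r" and "connected_in E r z"
  shows "acyclic_component E z"
  unfolding acyclic_component_def
proof (intro ballI notI)
  fix C w assume "C \<in> cycles E" "w \<in> \<Union>C" "connected_in E z w"
  then show False
    using assms(1) connected_in_trans[OF assms(2)] unfolding acyclic_component_def by blast
qed

lemma acyclic_component_mono:
  assumes "F \<subseteq> E" and "acyclic_component E r"
  shows "acyclic_component F r"
  unfolding acyclic_component_def
proof (intro ballI notI)
  fix C z assume "C \<in> cycles F" "z \<in> \<Union>C" "connected_in F r z"
  moreover have "C \<in> cycles E" using \<open>C \<in> cycles F\<close> cycles_mono[OF assms(1)] by blast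
  ultimately show False
    using assms(2) connected_in_mono[OF assms(1)] unfolding acyclic_component_def by blast
qed

lemma acyclic_component_isolated:
  assumes "\<forall>e\<in>E. r \<notin> e"
  shows "acyclic_component E r"
  unfolding acyclic_component_def
proof (intro ballI notI)
  fix C z assume "C \<in> cycles E" "z \<in> \<Union>C" "connected_in E r z"
  then have "r \<in> \<Union>C" using connected_in_isolated[OF assms \<open>connected_in E r z\<close>] by simp
  then show False using assms cycles_subset[OF \<open>C \<in> cycles E\<close>] by blast
qed

text \<open>An orientation picks the tail \<open>f e\<close> of every edge \<open>e\<close>; injectivity means
  that every vertex has out-degree at most one.\<close>

definition orientation :: "graph \<Rightarrow> (nat set \<Rightarrow> nat) \<Rightarrow> bool" where
  "orientation E f \<longleftrightarrow> inj_on f E \<and> (\<forall>e\<in>E. f e \<in> e)"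

definition arc :: "graph \<Rightarrow> (nat set \<Rightarrow> nat) \<Rightarrow> nat \<Rightarrow> nat \<Rightarrow> bool" where
  "arc E f p q \<longleftrightarrow> {p, q} \<in> E \<and> f {p, q} = p"

lemma orientation_subset: "F \<subseteq> E \<Longrightarrow> orientation E f \<Longrightarrow> orientation F f"
  unfolding orientation_def by (meson inj_on_subset subsetD)

lemma orientation_insert:
  assumes f: "orientation E f" and new: "{a, b} \<notin> E" and free: "\<forall>e\<in>E. f e \<noteq> a"
  shows "orientation (insert {a, b} E) (f({a, b} := a))"
proof -
  have "inj_on (f({a, b} := a)) E" using f new unfolding orientation_def inj_on_def by auto
  then show ?thesis using f new free unfolding orientation_def by auto
qed

lemma arc_unique:
  assumes "orientation E f" and "arc E f p q" and "arc E f p q'"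
  shows "q = q'"
proof -
  have "{p, q} = {p, q'}" using assms unfolding orientation_def arc_def inj_on_def by metis
  then show ?thesis by (auto simp: doubleton_eq_iff)
qed

lemma edge_arc:
  assumes "orientation E f" and "{p, q} \<in> E"
  shows "arc E f p q \<or> arc E f q p"
proof -
  have "f {p, q} \<in> {p, q}" using assms unfolding orientation_def by blast
  then show ?thesis using assms(2) unfolding arc_def by (auto simp: insert_commute)
qed

lemma cycle_tails:
  assumes f: "orientation E f" and c: "is_cycle E vs"
  shows "f ` cycle_edges vs = set vs"
proof -
  have tails: "f e \<in> e" if "e \<in> cycle_edges vs" for e
    using f that is_cycle_edges_subset[OF c] unfolding orientation_def by blast
  have "f ` cycle_edges vs \<subseteq> set vs"
  proof
    fix z assume "z \<in> f ` cycle_edges vs"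
    then obtain e where "e \<in> cycle_edges vs" and "z = f e" by blast
    then show "z \<in> set vs" using tails Union_cycle_edges[OF c] by blast
  qed
  moreover have "inj_on f (cycle_edges vs)"
    using f is_cycle_edges_subset[OF c] inj_on_subset unfolding orientation_def by blast
  then have "card (f ` cycle_edges vs) = card (set vs)"
    using card_cycle_edges[OF c] c by (simp add: card_image is_cycle_def distinct_card)
  ultimately show ?thesis by (simp add: card_subset_eq)
qed

lemma cycle_edges_eq_tails:
  assumes f: "orientation E f" and c: "is_cycle E vs"
  shows "cycle_edges vs = {e \<in> E. f e \<in> set vs}"
proof
  show "cycle_edges vs \<subseteq> {e \<in> E. f e \<in> set vs}"
    using is_cycle_edges_subset[OF c] cycle_tails[OF f c] by blast
  show "{e \<in> E. f e \<in> set vs} \<subseteq> cycle_edges vs"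
  proof
    fix e assume "e \<in> {e \<in> E. f e \<in> set vs}"
    then have e: "e \<in> E" "f e \<in> f ` cycle_edges vs" using cycle_tails[OF f c] by auto
    then obtain e' where e': "e' \<in> cycle_edges vs" "f e' = f e" by auto
    then have "e' \<in> E" using is_cycle_edges_subset[OF c] by blast
    then have "e' = e" using f e(1) e'(2) unfolding orientation_def inj_on_def by blast
    then show "e \<in> cycle_edges vs" using e' by simp
  qed
qed

lemma arcs_from_cycle:
  assumes f: "orientation E f" and c: "is_cycle E vs"
    and "(arc E f)\<^sup>*\<^sup>* a b" and "a \<in> set vs"
  shows "b \<in> set vs"
  using assms(3)
proof (induction rule: rtranclp_induct)
  case base
  then show ?case using assms(4) .
next
  case (step y z)
  then have "{y, z} \<in> E" and "f {y, z} \<in> set vs" by (auto simp: arc_def)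
  then have "{y, z} \<in> cycle_edges vs" using cycle_edges_eq_tails[OF f c] by blast
  then show ?case using Union_cycle_edges[OF c] by blast
qed

lemma connected_arcs_to_cycle:
  assumes f: "orientation E f" and c: "is_cycle E vs" and x: "x \<in> set vs"
    and "connected_in E x z"
  shows "\<exists>w\<in>set vs. (arc E f)\<^sup>*\<^sup>* z w"
proof -
  have "(adj E)\<^sup>*\<^sup>* x z" using assms(4) by (simp add: connected_in_def)
  then show ?thesis
  proof (induction rule: rtranclp_induct)
    case base
    then show ?case using x by blast
  next
    case (step z z')
    then obtain w where w: "w \<in> set vs" "(arc E f)\<^sup>*\<^sup>* z w" by blast
    have zz': "{z, z'} \<in> E" using step.hyps(2) by (simp add: adj_def)
    then consider "arc E f z z'" | "arc E f z' z" using edge_arc[OF f] by blast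
    then show ?case
    proof cases
      case 1
      from w(2) show ?thesis
      proof (cases rule: converse_rtranclpE)
        case base
        then show ?thesis using arcs_from_cycle[OF f c _ w(1)] 1 by blast
      next
        case (step y)
        then show ?thesis using arc_unique[OF f 1] w(1) by blast
      qed
    next
      case 2
      then show ?thesis using w by (meson converse_rtranclp_into_rtranclp)
    qed
  qed
qed

lemma cycle_oriented:
  assumes f: "orientation E f" and c: "is_cycle E vs"
  shows "(\<forall>i < length vs. arc E f (vs ! i) (vs ! ((i + 1) mod length vs))) \<or>
         (\<forall>i < length vs. arc E f (vs ! ((i + 1) mod length vs)) (vs ! i))"
proof -
  let ?k = "length vs"
  define ed where "ed i = {vs ! i, vs ! ((i + 1) mod ?k)}" for i
  define backward where "backward i \<longleftrightarrow> f (ed i) = vs ! ((i + 1) mod ?k)" for i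
  have k: "3 \<le> ?k" using c by (simp add: is_cycle_def)
  then have k0: "0 < ?k" by linarith
  have ed: "ed i \<in> E" "f (ed i) \<in> ed i" if "i < ?k" for i
    using c f that unfolding is_cycle_def orientation_def ed_def by blast+
  have next_backward: "backward ((i + 1) mod ?k)" if i: "i < ?k" and "backward i" for i
  proof (rule ccontr)
    let ?j = "(i + 1) mod ?k"
    assume "\<not> backward ?j"
    have j: "?j < ?k" using k0 by simp
    then have "f (ed ?j) = f (ed i)" using ed(2)[OF j] \<open>\<not> backward ?j\<close> \<open>backward i\<close>
      unfolding backward_def ed_def by auto
    then have "ed ?j = ed i" using f ed(1)[OF j] ed(1)[OF i] unfolding orientation_def inj_on_def by blast
    then have "?j = i" using is_cycle_edge_inj[OF c j i] unfolding ed_def by blast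
    moreover have "?j \<noteq> i" using Suc_mod_neq_self k by simp
    ultimately show False by simp
  qed
  have all_backward: "backward ((i + m) mod ?k)" if "i < ?k" and "backward i" for i m
  proof (induction m)
    case (Suc m)
    have "(i + m) mod ?k < ?k" using k0 by simp
    from next_backward[OF this Suc] show ?case by (simp add: mod_Suc_eq)
  qed (use that in simp)
  show ?thesis
  proof (cases "\<exists>i < ?k. backward i")
    case True
    then obtain i where i: "i < ?k" "backward i" by blast
    have "backward j" if "j < ?k" for j
      using all_backward[OF i, of "j + ?k - i"] i(1) that by simp
    then show ?thesis using ed(1) unfolding backward_def arc_def ed_def by (simp add: insert_commute)
  next
    case False
    then have "f (ed i) = vs ! i" if "i < ?k" for i
      using ed(2)[OF that] that unfolding backward_def ed_def by auto
    then show ?thesis using ed(1) unfolding arc_def ed_def by simp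
  qed
qed

lemma cycle_arcs_connected:
  assumes f: "orientation E f" and c: "is_cycle E vs" and "a \<in> set vs" and "b \<in> set vs"
  shows "(arc E f)\<^sup>*\<^sup>* a b"
proof -
  have "vs \<noteq> []" using \<open>a \<in> set vs\<close> by auto
  from cycle_oriented[OF f c] show ?thesis
  proof
    assume "\<forall>i < length vs. arc E f (vs ! i) (vs ! ((i + 1) mod length vs))"
    then show ?thesis using rtranclp_around_cycle[OF \<open>vs \<noteq> []\<close>] assms(3,4) by blast
  next
    assume "\<forall>i < length vs. arc E f (vs ! ((i + 1) mod length vs)) (vs ! i)"
    then have "(arc E f)\<inverse>\<inverse>\<^sup>*\<^sup>* b a"
      using rtranclp_around_cycle[OF \<open>vs \<noteq> []\<close>, of "(arc E f)\<inverse>\<inverse>"] assms(3,4) by simp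
    then show ?thesis by (simp add: rtranclp_conversep)
  qed
qed

text \<open>With out-degree at most one, arcs leaving a cycle vertex stay on the cycle, and every vertex
  connected to a cycle reaches it along arcs. So two connected cycles share a vertex, from which
  all vertices of both are reachable along arcs; hence they have the same vertices.\<close>

lemma orientation_pseudoforest:
  assumes g: "is_graph n E" and f: "orientation E f"
  shows "pseudoforest n E"
  unfolding pseudoforest_def
proof (intro conjI g ballI impI)
  fix C1 C2 assume "C1 \<in> cycles E" "C2 \<in> cycles E"
    and "\<exists>x y. x \<in> \<Union>C1 \<and> y \<in> \<Union>C2 \<and> connected_in E x y"
  then obtain vs1 vs2 x y where c1: "is_cycle E vs1" "C1 = cycle_edges vs1"
    and c2: "is_cycle E vs2" "C2 = cycle_edges vs2"
    and x: "x \<in> set vs1" and y: "y \<in> set vs2" and "connected_in E x y"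
    using Union_cycle_edges by (metis cycles_iff)
  then obtain w where w1: "w \<in> set vs1" and "(arc E f)\<^sup>*\<^sup>* y w"
    using connected_arcs_to_cycle[OF f c1(1) x] by blast
  then have w2: "w \<in> set vs2" using arcs_from_cycle[OF f c2(1) _ y] by blast
  have "set vs1 = set vs2"
    using cycle_arcs_connected[OF f c1(1) w1] cycle_arcs_connected[OF f c2(1) w2]
      arcs_from_cycle[OF f c2(1) _ w2] arcs_from_cycle[OF f c1(1) _ w1] by blast
  then show "C1 = C2" using c1 c2 cycle_edges_eq_tails[OF f] by simp
qed

lemma orientation_acyclic_component:
  assumes f: "orientation E f" and free: "\<forall>e\<in>E. f e \<noteq> r"
  shows "acyclic_component E r"
  unfolding acyclic_component_def
proof (intro ballI notI)
  fix C z assume "C \<in> cycles E" and "z \<in> \<Union>C" and "connected_in E r z"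
  then obtain vs where c: "is_cycle E vs" "C = cycle_edges vs" and z: "z \<in> set vs"
    using Union_cycle_edges cycles_iff by metis
  obtain w where w: "w \<in> set vs" "(arc E f)\<^sup>*\<^sup>* r w"
    using connected_arcs_to_cycle[OF f c(1) z connected_in_sym[OF \<open>connected_in E r z\<close>]] by blast
  from w(2) show False
  proof (cases rule: converse_rtranclpE)
    case base
    then show False using w(1) free cycle_tails[OF f c(1)] is_cycle_edges_subset[OF c(1)] by force
  next
    case (step y)
    then show False using free by (auto simp: arc_def)
  qed
qed

lemma acyclic_endpoint_of_connected:
  assumes new: "{u, v} \<notin> F" and pf: "pseudoforest n (insert {u, v} F)"
    and uv: "connected_in F u v"
  shows "acyclic_component F u"
    and "acyclic_component (insert {u, v} F) r \<Longrightarrow> \<not> connected_in F r u"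
proof -
  let ?E = "insert {u, v} F"
  have sub: "F \<subseteq> ?E" by blast
  have "u \<noteq> v" using pf is_graph_edgeD(1) by (auto simp: pseudoforest_def)
  moreover have "?E - {{u, v}} = F" using new by blast
  ultimately obtain C0 where C0: "C0 \<in> cycles ?E" "{u, v} \<in> C0"
    using cycle_through_edge[of u v ?E] uv by auto
  then have u: "u \<in> \<Union>C0" by blast
  show "acyclic_component F u"
    unfolding acyclic_component_def
  proof (intro ballI notI)
    fix C z assume C: "C \<in> cycles F" "z \<in> \<Union>C" "connected_in F u z"
    have "C \<in> cycles ?E" using C(1) cycles_mono[OF sub] by blast
    moreover have "connected_in ?E u z" using connected_in_mono[OF sub C(3)] .
    ultimately have "C0 = C" using pf C0(1) u C(2) unfolding pseudoforest_def by blast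
    then show False using C0(2) cycles_subset[OF C(1)] new by blast
  qed
  show "\<not> connected_in F r u" if "acyclic_component ?E r"
  proof
    assume "connected_in F r u"
    then have "connected_in ?E r u" by (rule connected_in_mono[OF sub])
    then show False using that C0(1) u unfolding acyclic_component_def by blast
  qed
qed

lemma acyclic_endpoint_of_disconnected:
  assumes pf: "pseudoforest n (insert {u, v} F)" and uv: "\<not> connected_in F u v"
  shows "acyclic_component F u \<or> acyclic_component F v"
proof (rule ccontr)
  let ?E = "insert {u, v} F"
  have sub: "F \<subseteq> ?E" by blast
  assume "\<not> ?thesis"
  then obtain Cu zu Cv zv where Cu: "Cu \<in> cycles F" "zu \<in> \<Union>Cu" "connected_in F u zu"
    and Cv: "Cv \<in> cycles F" "zv \<in> \<Union>Cv" "connected_in F v zv"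
    unfolding acyclic_component_def by blast
  have "connected_in ?E u v" by (rule connected_in_edge) simp
  then have "connected_in ?E zu zv"
    using connected_in_mono[OF sub] Cu(3) Cv(3) connected_in_sym connected_in_trans by meson
  moreover have "Cu \<in> cycles ?E" "Cv \<in> cycles ?E" using Cu(1) Cv(1) cycles_mono[OF sub] by blast+
  ultimately have "Cu = Cv" using pf Cu(2) Cv(2) unfolding pseudoforest_def by blast
  then obtain vs where "is_cycle F vs" "zu \<in> set vs" "zv \<in> set vs"
    using Cu(1,2) Cv(2) Union_cycle_edges cycles_iff by metis
  then have "connected_in F zu zv" by (rule is_cycle_connected)
  then show False using uv Cu(3) Cv(3) connected_in_sym connected_in_trans by meson
qed

lemma acyclic_far_endpoint:
  assumes r: "r \<in> R" and ru: "connected_in F r u" and uv: "\<not> connected_in F u v"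
    and roots_acyclic: "\<forall>r\<in>R. acyclic_component (insert {u, v} F) r"
    and roots_apart: "\<forall>r1\<in>R. \<forall>r2\<in>R. connected_in (insert {u, v} F) r1 r2 \<longrightarrow> r1 = r2"
  shows "acyclic_component F v \<and> (\<forall>r\<in>R. \<not> connected_in F r v)"
proof
  let ?E = "insert {u, v} F"
  have sub: "F \<subseteq> ?E" by blast
  have "connected_in ?E u v" by (rule connected_in_edge) simp
  then have rv: "connected_in ?E r v" using connected_in_mono[OF sub ru] connected_in_trans by blast
  show "acyclic_component F v"
    using acyclic_component_mono[OF sub acyclic_component_connected[OF _ rv]] roots_acyclic r by blast
  show "\<forall>r'\<in>R. \<not> connected_in F r' v"
  proof (intro ballI notI)
    fix r' assume r': "r' \<in> R" "connected_in F r' v"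
    then have "connected_in ?E r r'"
      using rv connected_in_mono[OF sub] connected_in_sym connected_in_trans by meson
    then have "r' = r" using roots_apart r r'(1) by blast
    then show False using uv ru r'(2) connected_in_sym connected_in_trans by meson
  qed
qed

lemma acyclic_endpoint:
  assumes new: "{u, v} \<notin> F" and pf: "pseudoforest n (insert {u, v} F)"
    and roots_acyclic: "\<forall>r\<in>R. acyclic_component (insert {u, v} F) r"
    and roots_apart: "\<forall>r1\<in>R. \<forall>r2\<in>R. connected_in (insert {u, v} F) r1 r2 \<longrightarrow> r1 = r2"
  shows "\<exists>p\<in>{u, v}. acyclic_component F p \<and> (\<forall>r\<in>R. \<not> connected_in F r p)"
proof (cases "connected_in F u v")
  case True
  then show ?thesis using acyclic_endpoint_of_connected[OF new pf] roots_acyclic by blast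
next
  case False
  have vu: "\<not> connected_in F v u" using False connected_in_sym by blast
  have swap: "insert {v, u} F = insert {u, v} F" by (simp add: insert_commute)
  consider r where "r \<in> R" "connected_in F r u" | r where "r \<in> R" "connected_in F r v"
    | "\<forall>r\<in>R. \<not> connected_in F r u \<and> \<not> connected_in F r v" by blast
  then show ?thesis
  proof cases
    case 1
    then show ?thesis using acyclic_far_endpoint[OF _ _ False roots_acyclic roots_apart] by blast
  next
    case 2
    then show ?thesis
      using acyclic_far_endpoint[of _ R F v u] vu roots_acyclic roots_apart unfolding swap by blast
  next
    case 3
    then show ?thesis using acyclic_endpoint_of_disconnected[OF pf False] by blast
  qed
qed

text \<open>Induction on the edges: the last edge is oriented out of an endpoint \<open>p\<close> whose component in
  the remaining graph is acyclic and contains no root, and \<open>p\<close> becomes a root of that graph.\<close>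

lemma orientation_avoiding_roots:
  assumes "pseudoforest n E" and "\<forall>r\<in>R. acyclic_component E r"
    and "\<forall>r1\<in>R. \<forall>r2\<in>R. connected_in E r1 r2 \<longrightarrow> r1 = r2"
  shows "\<exists>f. orientation E f \<and> (\<forall>e\<in>E. f e \<notin> R)"
proof -
  have "finite E" using assms(1) is_graph_finite by (auto simp: pseudoforest_def)
  then show ?thesis using assms
  proof (induction E arbitrary: R rule: finite_induct)
    case empty
    then show ?case by (simp add: orientation_def)
  next
    case (insert e F)
    have sub: "F \<subseteq> insert e F" by blast
    have "is_graph n (insert e F)" using insert.prems(1) by (simp add: pseudoforest_def)
    then obtain u v where e: "e = {u, v}" unfolding is_graph_def by blast
    have "{u, v} \<notin> F" using insert.hyps(2) e by simp
    from acyclic_endpoint[OF this insert.prems[unfolded e]]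
    obtain p where p: "p \<in> {u, v}" "acyclic_component F p" "\<forall>r\<in>R. \<not> connected_in F r p"
      by blast
    have "\<exists>f. orientation F f \<and> (\<forall>e\<in>F. f e \<notin> insert p R)"
    proof (rule insert.IH)
      show "pseudoforest n F" using pseudoforest_subset[OF sub insert.prems(1)] .
      show "\<forall>r\<in>insert p R. acyclic_component F r"
        using p(2) acyclic_component_mono[OF sub] insert.prems(2) by blast
      show "\<forall>r1\<in>insert p R. \<forall>r2\<in>insert p R. connected_in F r1 r2 \<longrightarrow> r1 = r2"
      proof (intro ballI impI)
        fix r1 r2 assume "r1 \<in> insert p R" "r2 \<in> insert p R" "connected_in F r1 r2"
        then show "r1 = r2"
          using p(3) insert.prems(3) connected_in_mono[OF sub, of r1 r2] connected_in_sym[of F r1 r2]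
          by auto
      qed
    qed
    then obtain f where f: "orientation F f" "\<forall>e\<in>F. f e \<notin> insert p R" by blast
    obtain q where e': "e = {p, q}" using p(1) e by (auto simp: insert_commute)
    have "orientation (insert e F) (f(e := p))"
      using orientation_insert[of F f p q] f insert.hyps(2) e' by blast
    moreover have "\<forall>x\<in>insert e F. (f(e := p)) x \<notin> R"
      using f(2) p(3) connected_in_refl insert.hyps(2) by auto
    ultimately show ?case by blast
  qed
qed

lemma pseudoforest_iff_orientation:
  "pseudoforest n E \<longleftrightarrow> is_graph n E \<and> (\<exists>f. orientation E f)"
proof
  assume pf: "pseudoforest n E"
  then have "is_graph n E" by (simp add: pseudoforest_def)
  moreover obtain f where "orientation E f" using orientation_avoiding_roots[OF pf, of "{}"] by auto
  ultimately show "is_graph n E \<and> (\<exists>f. orientation E f)" by blast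
qed (use orientation_pseudoforest in blast)

lemma pseudoforest_orientation_avoiding:
  "pseudoforest n E \<Longrightarrow> acyclic_component E r \<Longrightarrow> \<exists>f. orientation E f \<and> (\<forall>e\<in>E. f e \<noteq> r)"
  using orientation_avoiding_roots[of n E "{r}"] by auto

lemma pseudoforest_insert_pendant:
  assumes pf: "pseudoforest n K" and l: "\<forall>e\<in>K. l \<notin> e"
    and "l \<in> {1..n}" and "t \<in> {1..n}" and "l \<noteq> t"
  shows "pseudoforest n (insert {l, t} K)"
proof -
  obtain f where f: "orientation K f" using pf pseudoforest_iff_orientation by blast
  then have "\<forall>e\<in>K. f e \<noteq> l" using l unfolding orientation_def by metis
  moreover have "{l, t} \<notin> K" using l by blast
  ultimately have "orientation (insert {l, t} K) (f({l, t} := l))" using orientation_insert[OF f] by blast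
  moreover have "is_graph n (insert {l, t} K)"
    using pf assms(3-5) is_graph_insert by (auto simp: pseudoforest_def)
  ultimately show ?thesis using orientation_pseudoforest by blast
qed

section \<open>Maximum degree two and leafless pseudoforests\<close>

lemma edge_at_cycle_vertex:
  assumes c: "is_cycle E vs" and "finite E" and deg: "degree E z \<le> 2"
    and z: "z \<in> set vs" and zq: "{z, q} \<in> E"
  shows "{z, q} \<in> cycle_edges vs"
proof -
  let ?k = "length vs"
  have k: "3 \<le> ?k" using c by (simp add: is_cycle_def)
  obtain i where i: "i < ?k" "vs ! i = z" using z by (meson in_set_conv_nth)
  define j where "j = (i + (?k - 1)) mod ?k"
  have k0: "0 < ?k" using k by linarith
  have "Suc (i + (?k - 1)) = i + ?k" using k0 by simp
  then have j: "j < ?k" "(j + 1) mod ?k = i" using i k0 by (simp_all add: j_def mod_Suc_eq)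
  define a b where "a = vs ! ((i + 1) mod ?k)" and "b = vs ! j"
  have za: "{z, a} \<in> cycle_edges vs" using cycle_edgesI[OF i(1)] i(2) by (simp add: a_def)
  have bz: "{b, z} \<in> cycle_edges vs" using cycle_edgesI[OF j(1)] j(2) i(2) by (simp add: b_def)
  have "a \<noteq> b"
  proof
    assume "a = b"
    then have "i = j" using is_cycle_edge_inj[OF c i(1) j(1)] i(2) j(2)
      by (simp add: a_def b_def insert_commute)
    then show False using j(2) Suc_mod_neq_self k by simp
  qed
  have "{a, b} \<subseteq> neighbors E z"
    using za bz is_cycle_edges_subset[OF c] by (auto simp: neighbors_def insert_commute)
  moreover have "card {a, b} = 2" using \<open>a \<noteq> b\<close> by simp
  ultimately have "neighbors E z = {a, b}"
    using deg finite_neighbors[OF \<open>finite E\<close>, of z]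
    by (metis card_seteq degree_eq_card_neighbors)
  then have "q = a \<or> q = b" using zq by (auto simp: neighbors_def)
  then show ?thesis using za bz by (auto simp: insert_commute)
qed

lemma max_degree_2_cycle_closed:
  assumes c: "is_cycle E vs" and "finite E" and deg: "\<forall>z. degree E z \<le> 2"
    and x: "x \<in> set vs" and "connected_in E x y"
  shows "y \<in> set vs"
proof -
  have "(adj E)\<^sup>*\<^sup>* x y" using assms(5) by (simp add: connected_in_def)
  then show ?thesis
  proof (induction rule: rtranclp_induct)
    case (step z z')
    then have "{z, z'} \<in> cycle_edges vs"
      using edge_at_cycle_vertex[OF c \<open>finite E\<close>] deg by (simp add: adj_def)
    then show ?case using Union_cycle_edges[OF c] by blast
  qed (use x in simp)
qed

lemma max_degree_2_pseudoforest:
  assumes g: "is_graph n E" and deg: "\<forall>z. degree E z \<le> 2"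
  shows "pseudoforest n E"
proof -
  have fin: "finite E" using is_graph_finite[OF g] .
  have sub: "C2 \<subseteq> C1"
    if C1: "C1 \<in> cycles E" and C2: "C2 \<in> cycles E" and x: "x \<in> \<Union>C1" and y: "y \<in> \<Union>C2"
      and xy: "connected_in E x y" for C1 C2 x y
  proof
    fix e assume e: "e \<in> C2"
    obtain vs1 vs2 where c1: "is_cycle E vs1" "C1 = cycle_edges vs1"
      and c2: "is_cycle E vs2" "C2 = cycle_edges vs2"
      using C1 C2 cycles_iff by metis
    obtain j where j: "j < length vs2" "e = {vs2 ! j, vs2 ! ((j + 1) mod length vs2)}"
      using e c2(2) by (auto elim: cycle_edgesE)
    have "y \<in> set vs2" "vs2 ! j \<in> set vs2" using y c2 Union_cycle_edges j(1) by auto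
    then have "connected_in E x (vs2 ! j)"
      using connected_in_trans[OF xy is_cycle_connected[OF c2(1)]] by blast
    moreover have "x \<in> set vs1" using x c1 Union_cycle_edges by blast
    ultimately have "vs2 ! j \<in> set vs1" using max_degree_2_cycle_closed[OF c1(1) fin deg] by blast
    moreover have "e \<in> E" using e cycles_subset[OF C2] by blast
    ultimately show "e \<in> C1" using edge_at_cycle_vertex[OF c1(1) fin] deg j(2) c1(2) by blast
  qed
  show ?thesis
    unfolding pseudoforest_def
  proof (intro conjI g ballI impI)
    fix C1 C2 assume "C1 \<in> cycles E" "C2 \<in> cycles E"
      and "\<exists>x y. x \<in> \<Union>C1 \<and> y \<in> \<Union>C2 \<and> connected_in E x y"
    then show "C1 = C2" using sub connected_in_sym by (metis subset_antisym)
  qed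
qed

lemma double_counting:
  assumes "finite V" and "finite E"
  shows "(\<Sum>z\<in>V. card {e \<in> E. P z e}) = (\<Sum>e\<in>E. card {z \<in> V. P z e})"
proof -
  have "(\<Sum>z\<in>V. card {e \<in> E. P z e}) = (\<Sum>z\<in>V. \<Sum>e\<in>E. if P z e then 1 else 0)"
    using assms(2) by (simp add: sum.inter_filter[symmetric])
  also have "\<dots> = (\<Sum>e\<in>E. \<Sum>z\<in>V. if P z e then 1 else 0)" by (rule sum.swap)
  also have "\<dots> = (\<Sum>e\<in>E. card {z \<in> V. P z e})"
    using assms(1) by (simp add: sum.inter_filter[symmetric])
  finally show ?thesis .
qed
lemma sum_degree:
  assumes g: "is_graph n E"
  shows "(\<Sum>z\<in>{1..n}. degree E z) = 2 * card E"
proof -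
  have "(\<Sum>z\<in>{1..n}. degree E z) = (\<Sum>z\<in>{1..n}. card {e \<in> E. z \<in> e})"
    using card_incident_edges[OF g] by (simp add: incident_edges_def)
  also have "\<dots> = (\<Sum>e\<in>E. card {z \<in> {1..n}. z \<in> e})"
    using is_graph_finite[OF g] by (simp add: double_counting)
  also have "\<dots> = (\<Sum>e\<in>E. 2)"
  proof (rule sum.cong)
    fix e assume "e \<in> E"
    then obtain a b where "e = {a, b}" "a \<noteq> b" "a \<in> {1..n}" "b \<in> {1..n}"
      using g unfolding is_graph_def by blast
    then have "{z \<in> {1..n}. z \<in> e} = {a, b}" by auto
    then show "card {z \<in> {1..n}. z \<in> e} = 2" using \<open>a \<noteq> b\<close> by simp
  qed simp
  finally show ?thesis by simp
qed

lemma sum_out_degree: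
  assumes g: "is_graph n E" and f: "orientation E f"
  shows "(\<Sum>z\<in>{1..n}. card {e \<in> E. f e = z}) = card E"
proof -
  have "(\<Sum>z\<in>{1..n}. card {e \<in> E. f e = z}) = (\<Sum>e\<in>E. card {z \<in> {1..n}. f e = z})"
    using is_graph_finite[OF g] by (simp add: double_counting)
  also have "\<dots> = (\<Sum>e\<in>E. 1)"
  proof (rule sum.cong)
    fix e assume "e \<in> E"
    then have "f e \<in> {1..n}" using f g unfolding orientation_def is_graph_def by fastforce
    then have "{z \<in> {1..n}. f e = z} = {f e}" by auto
    then show "card {z \<in> {1..n}. f e = z} = 1" by simp
  qed simp
  finally show ?thesis by simp
qed

text \<open>The degrees sum to twice the number of edges and the out-degrees of an orientation
  sum to the number of edges; without leaves every vertex has degree at least twice its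
  out-degree, so none can have degree above 2.\<close>

lemma leafless_pseudoforest_degree_le_2:
  assumes pf: "pseudoforest n E" and no_leaf: "\<forall>z. degree E z \<noteq> 1"
  shows "degree E z \<le> 2"
proof (rule ccontr)
  assume big: "\<not> degree E z \<le> 2"
  have g: "is_graph n E" using pf by (simp add: pseudoforest_def)
  obtain f where f: "orientation E f" using pf pseudoforest_iff_orientation by blast
  define out where "out y = card {e \<in> E. f e = y}" for y
  have out_le: "out y \<le> 1" for y
  proof -
    have "inj_on f E" using f by (simp add: orientation_def)
    then have "inj_on f {e \<in> E. f e = y}" by (rule inj_on_subset) auto
    then have "card {e \<in> E. f e = y} \<le> card {y}" by (intro card_inj_on_le) auto
    then show ?thesis by (simp add: out_def)
  qed
  have twice: "2 * out y \<le> degree E y" for y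
  proof (cases "out y = 0")
    case False
    then have "{e \<in> E. f e = y} \<noteq> {}" unfolding out_def by (metis card.empty)
    then obtain e where "e \<in> E" "f e = y" by blast
    then have "incident_edges E y \<noteq> {}" using f unfolding orientation_def incident_edges_def by blast
    moreover have "finite (incident_edges E y)"
      using is_graph_finite[OF g] by (simp add: incident_edges_def)
    ultimately have "card (incident_edges E y) \<noteq> 0" by simp
    then have "degree E y \<noteq> 0" using card_incident_edges[OF g] by simp
    moreover have "degree E y \<noteq> 1" using no_leaf by blast
    ultimately show ?thesis using out_le[of y] by linarith
  qed simp
  have "z \<in> {1..n}" using big degree_outside[OF g] by fastforce
  moreover have "2 * out z < degree E z" using big out_le[of z] by linarith
  ultimately have "(\<Sum>y\<in>{1..n}. 2 * out y) < (\<Sum>y\<in>{1..n}. degree E y)"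
    using twice by (intro sum_strict_mono_ex1) auto
  also have "\<dots> = (\<Sum>y\<in>{1..n}. 2 * out y)"
    using sum_degree[OF g] sum_out_degree[OF g f] by (simp add: out_def sum_distrib_left[symmetric])
  finally show False by simp
qed

section \<open>2-switches and sequences of p-switches\<close>

lemma card_eq_if_degree_eq:
  assumes "is_graph n G" and "is_graph n H" and "\<forall>z. degree G z = degree H z"
  shows "card G = card H"
  using sum_degree[OF assms(1)] sum_degree[OF assms(2)] assms(3) by simp

lemma interchangeable_distinct:
  assumes "is_graph n G" and "interchangeable G (a, b, c, d)"
  shows "a \<noteq> b" "c \<noteq> d" "a \<noteq> c" "a \<noteq> d" "b \<noteq> c" "b \<noteq> d"
  using assms(2) is_graph_edgeD(1)[OF assms(1)] unfolding interchangeable_def by auto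

lemma two_switch_eq:
  "interchangeable G (a, b, c, d) \<Longrightarrow> two_switch (a, b, c, d) G = G - {{a, b}, {c, d}} \<union> {{a, c}, {b, d}}"
  by (simp add: two_switch_def)

lemma interchangeable_swap:
  "interchangeable G (a, b, c, d) \<longleftrightarrow> interchangeable G (b, a, d, c)"
  "interchangeable G (a, b, c, d) \<longleftrightarrow> interchangeable G (c, d, a, b)"
  unfolding interchangeable_def by (simp_all add: insert_commute) blast+

lemma two_switch_swap:
  "two_switch (a, b, c, d) G = two_switch (b, a, d, c) G"
  "two_switch (a, b, c, d) G = two_switch (c, d, a, b) G"
  using interchangeable_swap[of G a b c d]
  by (simp_all add: two_switch_def insert_commute)

lemma neighbors_two_switch:
  assumes g: "is_graph n G" and i: "interchangeable G (a, b, c, d)"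
  shows "neighbors (two_switch (a, b, c, d) G) a = insert c (neighbors G a - {b})"
proof -
  note distinct = interchangeable_distinct[OF g i]
  have "{a, u} \<noteq> {c, d}" "{a, u} \<noteq> {b, d}" for u using distinct by (auto simp: doubleton_eq_iff)
  moreover have "{a, u} = {a, b} \<longleftrightarrow> u = b" "{a, u} = {a, c} \<longleftrightarrow> u = c" for u
    by (auto simp: doubleton_eq_iff)
  ultimately show ?thesis unfolding two_switch_eq[OF i] neighbors_def by auto
qed

lemma neighbors_two_switch_other:
  assumes "z \<notin> {a, b, c, d}"
  shows "neighbors (two_switch (a, b, c, d) G) z = neighbors G z"
proof -
  have "{z, u} \<notin> {{a, b}, {c, d}, {a, c}, {b, d}}" for u using assms by (auto simp: doubleton_eq_iff)
  then show ?thesis unfolding two_switch_def neighbors_def by auto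
qed

lemma degree_two_switch_first:
  assumes g: "is_graph n G" and i: "interchangeable G (a, b, c, d)"
  shows "degree (two_switch (a, b, c, d) G) a = degree G a"
proof -
  have "b \<in> neighbors G a" "c \<notin> neighbors G a" using i by (auto simp: interchangeable_def neighbors_def)
  moreover have "finite (neighbors G a)" using finite_neighbors is_graph_finite[OF g] by blast
  ultimately have "0 < card (neighbors G a)" by (auto simp: card_gt_0_iff)
  with \<open>b \<in> neighbors G a\<close> \<open>c \<notin> neighbors G a\<close> \<open>finite (neighbors G a)\<close> show ?thesis
    using neighbors_two_switch[OF g i] by (simp add: degree_eq_card_neighbors card_Suc_Diff1)
qed

lemma degree_two_switch:
  assumes g: "is_graph n G"
  shows "degree (two_switch A G) z = degree G z"
proof -
  obtain a b c d where A: "A = (a, b, c, d)" by (cases A) auto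
  show ?thesis
  proof (cases "interchangeable G A")
    case True
    then have i: "interchangeable G (a, b, c, d)" "interchangeable G (b, a, d, c)"
      "interchangeable G (c, d, a, b)" "interchangeable G (d, c, b, a)"
      using A interchangeable_swap by blast+
    have swap_d: "two_switch (d, c, b, a) G = two_switch (a, b, c, d) G"
      using two_switch_swap by metis
    consider "z = a" | "z = b" | "z = c" | "z = d" | "z \<notin> {a, b, c, d}" by blast
    then show ?thesis
    proof cases
      case 5
      then show ?thesis using neighbors_two_switch_other A by (simp add: degree_eq_card_neighbors)
    qed (use A two_switch_swap swap_d degree_two_switch_first[OF g i(1)] degree_two_switch_first[OF g i(2)]
          degree_two_switch_first[OF g i(3)] degree_two_switch_first[OF g i(4)] in metis)+
  next
    case False
    then show ?thesis by (simp add: two_switch_def A)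
  qed
qed

lemma is_graph_two_switch:
  assumes g: "is_graph n G"
  shows "is_graph n (two_switch A G)"
proof -
  obtain a b c d where A: "A = (a, b, c, d)" by (cases A) auto
  show ?thesis
  proof (cases "interchangeable G A")
    case True
    then have i: "interchangeable G (a, b, c, d)" using A by simp
    then have "{a, b} \<in> G" "{c, d} \<in> G" by (auto simp: interchangeable_def)
    then have "a \<in> {1..n}" "b \<in> {1..n}" "c \<in> {1..n}" "d \<in> {1..n}" using is_graph_edgeD[OF g] by blast+
    moreover have "is_graph n (G - {{a, b}, {c, d}})" using is_graph_subset[OF _ g] by blast
    ultimately show ?thesis
      using interchangeable_distinct[OF g i] two_switch_eq[OF i] A
      by (simp add: is_graph_insert insert_commute)
  qed (simp add: two_switch_def A g)
qed

lemma two_switch_inverse: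
  assumes g: "is_graph n G" and i: "interchangeable G (a, b, c, d)"
  shows "interchangeable (two_switch (a, b, c, d) G) (a, c, b, d)"
    and "two_switch (a, c, b, d) (two_switch (a, b, c, d) G) = G"
proof -
  note distinct = interchangeable_distinct[OF g i]
  have "{a, b} \<noteq> {a, c}" "{a, b} \<noteq> {b, d}" "{c, d} \<noteq> {a, c}" "{c, d} \<noteq> {b, d}"
    using distinct by (auto simp: doubleton_eq_iff)
  then show i': "interchangeable (two_switch (a, b, c, d) G) (a, c, b, d)"
    using distinct unfolding two_switch_eq[OF i] interchangeable_def by auto
  have "two_switch (a, c, b, d) (two_switch (a, b, c, d) G)
      = two_switch (a, b, c, d) G - {{a, c}, {b, d}} \<union> {{a, b}, {c, d}}"
    by (rule two_switch_eq[OF i'])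
  also have "\<dots> = G" using i unfolding two_switch_eq[OF i] interchangeable_def by auto
  finally show "two_switch (a, c, b, d) (two_switch (a, b, c, d) G) = G" .
qed

lemma two_switch_isolated:
  assumes "\<forall>e\<in>G. v \<notin> e"
  shows "\<forall>e\<in>two_switch A G. v \<notin> e"
proof -
  obtain a b c d where A: "A = (a, b, c, d)" by (cases A) auto
  show ?thesis
  proof (cases "interchangeable G A")
    case True
    then have "{a, b} \<in> G" "{c, d} \<in> G" using A by (auto simp: interchangeable_def)
    then show ?thesis using assms True A two_switch_eq by auto
  qed (use assms A two_switch_def in auto)
qed

lemma two_switch_Un:
  assumes i: "interchangeable K (a, b, c, d)" and K: "\<forall>e\<in>K. v \<notin> e" and S: "\<forall>e\<in>S. v \<in> e"
  shows "interchangeable (K \<union> S) (a, b, c, d)"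
    and "two_switch (a, b, c, d) (K \<union> S) = two_switch (a, b, c, d) K \<union> S"
proof -
  have "{a, b} \<in> K" "{c, d} \<in> K" using i by (auto simp: interchangeable_def)
  then have "v \<notin> {a, b, c, d}" using K by auto
  moreover have "e \<notin> S" if "v \<notin> e" for e using S that by blast
  ultimately have "{a, b} \<notin> S" "{c, d} \<notin> S" "{a, c} \<notin> S" "{b, d} \<notin> S" by simp_all
  then show i': "interchangeable (K \<union> S) (a, b, c, d)" using i by (auto simp: interchangeable_def)
  show "two_switch (a, b, c, d) (K \<union> S) = two_switch (a, b, c, d) K \<union> S"
    using \<open>{a, b} \<notin> S\<close> \<open>{c, d} \<notin> S\<close> unfolding two_switch_eq[OF i] two_switch_eq[OF i'] by auto
qed

definition p_switch_step :: "nat \<Rightarrow> graph \<Rightarrow> graph \<Rightarrow> bool" where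
  "p_switch_step n G H \<longleftrightarrow> (\<exists>A. p_switch n G A \<and> H = two_switch A G)"

abbreviation p_reachable :: "nat \<Rightarrow> graph \<Rightarrow> graph \<Rightarrow> bool" where
  "p_reachable n \<equiv> (p_switch_step n)\<^sup>*\<^sup>*"

lemma p_switch_step_sym: "symp (p_switch_step n)"
proof (rule sympI)
  fix G H assume "p_switch_step n G H"
  then obtain a b c d where p: "p_switch n G (a, b, c, d)" and H: "H = two_switch (a, b, c, d) G"
    unfolding p_switch_step_def by (metis prod_cases4)
  then have g: "is_graph n G" and i: "interchangeable G (a, b, c, d)"
    by (auto simp: p_switch_def pseudoforest_def)
  have G_eq: "G = two_switch (a, c, b, d) H" using two_switch_inverse(2)[OF g i] H by simp
  have "pseudoforest n G" and "pseudoforest n H" using p H by (simp_all add: p_switch_def)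
  moreover have "interchangeable H (a, c, b, d)" using two_switch_inverse(1)[OF g i] H by simp
  ultimately have "p_switch n H (a, c, b, d)" by (simp add: p_switch_def G_eq[symmetric])
  with G_eq show "p_switch_step n H G" unfolding p_switch_step_def by blast
qed

lemma p_reachable_sym: "p_reachable n G H \<Longrightarrow> p_reachable n H G"
  using symp_rtranclp[OF p_switch_step_sym] by (blast dest: sympD)

lemma p_reachable_pseudoforest:
  "p_reachable n G H \<Longrightarrow> pseudoforest n G \<Longrightarrow> pseudoforest n H"
  by (induction rule: rtranclp_induct) (auto simp: p_switch_step_def p_switch_def)

lemma p_reachable_degree:
  assumes "p_reachable n G H" and "pseudoforest n G"
  shows "degree H z = degree G z"
  using assms(1)
proof (induction rule: rtranclp_induct)
  case (step K K')
  then have "is_graph n K" by (auto simp: p_switch_step_def p_switch_def pseudoforest_def)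
  then show ?case using step degree_two_switch by (auto simp: p_switch_step_def)
qed simp

lemma p_reachable_isolated:
  "p_reachable n G H \<Longrightarrow> \<forall>e\<in>G. v \<notin> e \<Longrightarrow> \<forall>e\<in>H. v \<notin> e"
  by (induction rule: rtranclp_induct) (auto simp: p_switch_step_def dest: two_switch_isolated)

lemma p_reachable_Un:
  assumes reach: "p_reachable n K1 K2" and K1: "\<forall>e\<in>K1. v \<notin> e" and S: "\<forall>e\<in>S. v \<in> e"
    and extend: "\<And>K. p_reachable n K1 K \<Longrightarrow> pseudoforest n (K \<union> S)"
  shows "p_reachable n (K1 \<union> S) (K2 \<union> S)"
  using reach
proof (induction rule: rtranclp_induct)
  case (step K K')
  obtain a b c d where p: "p_switch n K (a, b, c, d)" and K': "K' = two_switch (a, b, c, d) K"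
    using step.hyps(2) unfolding p_switch_step_def by (metis prod_cases4)
  have i: "interchangeable K (a, b, c, d)" using p by (simp add: p_switch_def)
  note Un = two_switch_Un[OF i p_reachable_isolated[OF step.hyps(1) K1] S]
  have "pseudoforest n (K \<union> S)" and "pseudoforest n (K' \<union> S)"
    using extend step.hyps by (auto intro: rtranclp.rtrancl_into_rtrancl)
  then have "p_switch_step n (K \<union> S) (K' \<union> S)"
    using Un K' unfolding p_switch_step_def p_switch_def by metis
  with step.IH show ?case by (rule rtranclp.rtrancl_into_rtrancl)
qed simp

lemma p_reachable_switch_sequence:
  assumes "p_reachable n G H"
  shows "\<exists>ts :: (nat \<times> nat \<times> nat \<times> nat) list. \<exists>Gs :: graph list.
           length Gs = length ts + 1 \<and> Gs ! 0 = G \<and> Gs ! length ts = H \<and>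
           (\<forall>i < length ts. p_switch n (Gs ! i) (ts ! i) \<and>
                            Gs ! (i + 1) = two_switch (ts ! i) (Gs ! i))"
  using assms
proof (induction rule: converse_rtranclp_induct)
  case base
  show ?case by (rule exI[of _ "[]"], rule exI[of _ "[H]"]) simp
next
  case (step G G')
  obtain A where A: "p_switch n G A" "G' = two_switch A G"
    using step.hyps(1) unfolding p_switch_step_def by blast
  obtain ts Gs where "length Gs = length ts + 1" "Gs ! 0 = G'" "Gs ! length ts = H"
    and steps: "\<forall>i < length ts. p_switch n (Gs ! i) (ts ! i) \<and> Gs ! (i + 1) = two_switch (ts ! i) (Gs ! i)"
    using step.IH by blast
  moreover have "\<forall>i < length (A # ts). p_switch n ((G # Gs) ! i) ((A # ts) ! i) \<and>
      (G # Gs) ! (i + 1) = two_switch ((A # ts) ! i) ((G # Gs) ! i)"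
  proof (intro allI impI)
    fix i assume "i < length (A # ts)"
    then show "p_switch n ((G # Gs) ! i) ((A # ts) ! i) \<and>
        (G # Gs) ! (i + 1) = two_switch ((A # ts) ! i) ((G # Gs) ! i)"
      using A steps \<open>Gs ! 0 = G'\<close> by (cases i) auto
  qed
  ultimately show ?case by (intro exI[of _ "A # ts"] exI[of _ "G # Gs"]) simp
qed

section \<open>Switching an edge onto a leaf\<close>

lemma neighbor_outside_neighborhood:
  assumes g: "is_graph n G" and pv: "p \<notin> neighbors G v" and xv: "x \<in> neighbors G v"
    and "x \<noteq> p" and "v \<noteq> p" and deg: "degree G x \<le> degree G p"
  shows "\<exists>y\<in>neighbors G p. y \<noteq> x \<and> y \<notin> neighbors G x"
proof (rule ccontr)
  assume "\<not> ?thesis"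
  then have sub: "neighbors G p \<subseteq> insert x (neighbors G x)" by blast
  have vx: "v \<in> neighbors G x" using xv neighbors_sym by metis
  have "v \<notin> neighbors G p" using pv neighbors_sym by metis
  moreover have "p \<notin> neighbors G p" using not_in_neighbors_self[OF g] .
  moreover have fin: "finite (neighbors G x)" using finite_neighbors is_graph_finite[OF g] by blast
  ultimately show False
  proof (cases "p \<in> neighbors G x")
    case True
    then have "degree G p \<le> card (insert x (neighbors G x - {v, p}))"
      using sub \<open>v \<notin> neighbors G p\<close> \<open>p \<notin> neighbors G p\<close> fin
      by (auto simp: degree_eq_card_neighbors intro!: card_mono)
    also have "\<dots> \<le> Suc (card (neighbors G x - {v, p}))" using fin by (simp add: card_insert_if)
    finally have "degree G p \<le> Suc (card (neighbors G x - {v, p}))" .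
    moreover have "card (neighbors G x - {v, p}) = degree G x - 2"
      using vx True \<open>v \<noteq> p\<close> fin by (simp add: card_Diff_subset degree_eq_card_neighbors)
    moreover have "2 \<le> degree G x"
      using vx True \<open>v \<noteq> p\<close> fin card_mono[OF fin, of "{v, p}"] by (simp add: degree_eq_card_neighbors)
    ultimately show False using deg by linarith
  next
    case False
    then have "x \<notin> neighbors G p" using neighbors_sym by metis
    then have "neighbors G p \<subseteq> neighbors G x - {v}" using sub \<open>v \<notin> neighbors G p\<close> by blast
    then have "degree G p \<le> card (neighbors G x - {v})"
      using fin by (simp add: card_mono degree_eq_card_neighbors)
    also have "\<dots> = degree G x - 1" using fin vx by (simp add: degree_eq_card_neighbors)
    finally have "degree G p \<le> degree G x - 1" .
    moreover have "1 \<le> degree G x"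
      using vx fin by (auto simp: degree_eq_card_neighbors card_gt_0_iff Suc_le_eq)
    ultimately show False using deg by linarith
  qed
qed

lemma leaf_switch_pseudoforest:
  assumes pf: "pseudoforest n G" and leaf: "neighbors G l = {x}"
    and ty: "{t, y} \<in> G" and t: "t \<noteq> l" "t \<noteq> x" and y: "y \<noteq> l" "y \<noteq> x"
    and xy: "{x, y} \<notin> G" and lt: "{l, t} \<notin> G"
    and h: "orientation (G - {{l, x}, {t, y}}) h" and a: "a \<in> {x, y}"
    and free: "\<forall>e\<in>G - {{l, x}, {t, y}}. h e \<noteq> a"
  shows "p_switch n G (l, x, t, y)"
proof -
  let ?K = "G - {{l, x}, {t, y}}"
  have g: "is_graph n G" using pf by (simp add: pseudoforest_def)
  have "x \<in> neighbors G l" using leaf by simp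
  then have lx: "{l, x} \<in> G" by (simp add: neighbors_def)
  then have "x \<noteq> l" using is_graph_edgeD(1)[OF g] by blast
  have i: "interchangeable G (l, x, t, y)" using lx ty t y xy lt by (auto simp: interchangeable_def)
  have l_isolated: "l \<notin> e" if "e \<in> ?K" for e
  proof
    assume "l \<in> e"
    with that obtain u where "e = {l, u}" "u \<in> neighbors G l" using is_graph_edge_at[OF g] by blast
    then show False using leaf that by simp
  qed
  obtain b where ab: "{a, b} = {x, y}" using a by (auto simp: insert_commute)
  have "a \<noteq> l" using ab \<open>x \<noteq> l\<close> y by (auto simp: doubleton_eq_iff)
  have "{a, b} \<notin> ?K" using ab xy by auto
  with h free have h1: "orientation (insert {a, b} ?K) (h({a, b} := a))"
    by (intro orientation_insert)
  have "\<forall>e\<in>insert {a, b} ?K. (h({a, b} := a)) e \<noteq> l"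
    using h l_isolated \<open>a \<noteq> l\<close> unfolding orientation_def by auto
  moreover have "{l, t} \<notin> insert {a, b} ?K" using lt ab \<open>x \<noteq> l\<close> y by (auto simp: doubleton_eq_iff)
  ultimately have "orientation (insert {l, t} (insert {a, b} ?K)) ((h({a, b} := a))({l, t} := l))"
    using orientation_insert[OF h1] by blast
  moreover have "two_switch (l, x, t, y) G = insert {l, t} (insert {a, b} ?K)"
    using two_switch_eq[OF i] ab by auto
  moreover have "is_graph n (two_switch (l, x, t, y) G)" by (rule is_graph_two_switch[OF g])
  ultimately have "pseudoforest n (two_switch (l, x, t, y) G)" using orientation_pseudoforest by metis
  then show ?thesis using pf i by (simp add: p_switch_def)
qed

lemma leaf_switch_acyclic:
  assumes g: "is_graph n G" and leaf: "neighbors G l = {x}" and t: "t \<noteq> l" "t \<noteq> x"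
    and deg: "degree G x \<le> degree G t" and ty: "{t, y} \<in> G" and "y \<noteq> x"
    and t_acyclic: "acyclic_component (G - {{l, x}, {t, y}}) t"
    and others: "\<forall>z\<in>neighbors G t - {y}. z = x \<or> z \<in> neighbors G x"
  shows "acyclic_component (G - {{l, x}, {t, y}}) x"
proof (cases "neighbors G t \<subseteq> {y}")
  case True
  have fin: "finite (neighbors G x)" using finite_neighbors is_graph_finite[OF g] by blast
  have "degree G t \<le> 1" using True card_mono[of "{y}"] by (simp add: degree_eq_card_neighbors)
  then have "card (neighbors G x) \<le> 1" using deg by (simp add: degree_eq_card_neighbors)
  moreover have "l \<in> neighbors G x" using leaf neighbors_sym by blast
  ultimately have x_leaf: "neighbors G x = {l}" using fin by (auto simp: card_le_Suc0_iff_eq)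
  have "x \<notin> e" if "e \<in> G - {{l, x}, {t, y}}" for e
  proof
    assume "x \<in> e"
    with that obtain u where "e = {x, u}" "u \<in> neighbors G x" using is_graph_edge_at[OF g] by blast
    then show False using x_leaf that by (simp add: insert_commute)
  qed
  then show ?thesis by (intro acyclic_component_isolated) blast
next
  case False
  let ?K = "G - {{l, x}, {t, y}}"
  obtain z where z: "z \<in> neighbors G t" "z \<noteq> y" using False by blast
  have "l \<notin> neighbors G t" using leaf t neighbors_sym by blast
  then have "z \<noteq> l" "z \<noteq> t" using z(1) not_in_neighbors_self[OF g] by blast+
  then have tz: "{t, z} \<in> ?K" using z t by (auto simp: neighbors_def doubleton_eq_iff)
  have "connected_in ?K t x"
  proof (cases "z = x")
    case True
    then show ?thesis using connected_in_edge[OF tz] by simp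
  next
    case False
    then have "{z, x} \<in> G" using others z by (auto simp: neighbors_def insert_commute)
    then have "{z, x} \<in> ?K" using \<open>z \<noteq> l\<close> \<open>z \<noteq> t\<close> t by (auto simp: doubleton_eq_iff)
    then show ?thesis using connected_in_trans[OF connected_in_edge[OF tz] connected_in_edge] by blast
  qed
  then show ?thesis by (rule acyclic_component_connected[OF t_acyclic])
qed

lemma leaf_switch_out_of_t:
  assumes pf: "pseudoforest n G" and leaf: "neighbors G l = {x}" and t: "t \<noteq> l" "t \<noteq> x"
    and deg: "degree G x \<le> degree G t" and f: "orientation (G - {{l, x}}) f"
    and y: "y \<in> neighbors G t" "y \<noteq> x" and ft: "f {t, y} = t"
    and heads: "\<forall>z\<in>neighbors G t. f {t, z} = z \<longrightarrow> z = x \<or> z \<in> neighbors G x"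
  shows "\<exists>h. orientation (G - {{l, x}, {t, y}}) h \<and> (\<forall>e\<in>G - {{l, x}, {t, y}}. h e \<noteq> x)"
proof -
  let ?G0 = "G - {{l, x}}" and ?K = "G - {{l, x}, {t, y}}"
  have g: "is_graph n G" using pf by (simp add: pseudoforest_def)
  have at_t: "{t, z} \<in> ?G0" if "z \<in> neighbors G t" for z
    using that t by (auto simp: neighbors_def doubleton_eq_iff)
  have tail_t: "e = {t, y}" if "e \<in> ?G0" and "f e = t" for e
    using f that at_t[OF y(1)] ft unfolding orientation_def inj_on_def by metis
  have "orientation ?K f" by (rule orientation_subset[OF _ f]) blast
  moreover have "\<forall>e\<in>?K. f e \<noteq> t" using tail_t by blast
  ultimately have "acyclic_component ?K t" by (rule orientation_acyclic_component)
  moreover have "z = x \<or> z \<in> neighbors G x" if z: "z \<in> neighbors G t - {y}" for z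
  proof -
    have tz: "{t, z} \<in> ?G0" using at_t z by blast
    moreover have "{t, z} \<noteq> {t, y}" using z by (auto simp: doubleton_eq_iff)
    ultimately have "f {t, z} \<noteq> t" using tail_t by blast
    moreover have "f {t, z} \<in> {t, z}" using f tz unfolding orientation_def by blast
    ultimately show ?thesis using heads z by auto
  qed
  ultimately have "acyclic_component ?K x"
    using leaf_switch_acyclic[OF g leaf t deg _ y(2)] y(1) by (simp add: neighbors_def)
  moreover have "pseudoforest n ?K" using pseudoforest_subset[OF _ pf] by blast
  ultimately show ?thesis using pseudoforest_orientation_avoiding by blast
qed

text \<open>The switch \<open>(l, x, t, y)\<close> trades \<open>lx\<close> and \<open>ty\<close> for \<open>lt\<close> and \<open>xy\<close>, where \<open>y \<noteq> x\<close> is a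
  neighbour of \<open>t\<close> not adjacent to \<open>x\<close>. Orient \<open>G - lx\<close>. If some such \<open>ty\<close> has tail \<open>y\<close>, then \<open>xy\<close>
  takes over as the outgoing edge of \<open>y\<close>. Otherwise \<open>t\<close> has no outgoing edge left in
  \<open>G - lx - ty\<close>, so its component there is acyclic; it contains \<open>x\<close> unless \<open>x\<close> is a leaf, and
  either way \<open>xy\<close> can be oriented out of \<open>x\<close>. Finally \<open>lt\<close> is oriented out of the leaf \<open>l\<close>.\<close>

lemma leaf_switch_exists:
  assumes pf: "pseudoforest n G" and leaf: "neighbors G l = {x}" and "t \<noteq> l" and lt: "{l, t} \<notin> G"
    and deg: "degree G x \<le> degree G t"
  shows "\<exists>A. p_switch n G A \<and> {l, t} \<in> two_switch A G"
proof -
  let ?G0 = "G - {{l, x}}"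
  have g: "is_graph n G" using pf by (simp add: pseudoforest_def)
  have "x \<in> neighbors G l" using leaf by simp
  then have "{l, x} \<in> G" by (simp add: neighbors_def)
  then have "t \<noteq> x" using lt by blast
  then have tl: "t \<notin> neighbors G l" using leaf by simp
  obtain f where f: "orientation ?G0 f"
    using pseudoforest_subset[OF _ pf, of ?G0] pseudoforest_iff_orientation by blast
  obtain y h a where y: "y \<in> neighbors G t" "y \<noteq> x" "y \<notin> neighbors G x"
    and h: "orientation (G - {{l, x}, {t, y}}) h" and a: "a \<in> {x, y}"
    and free: "\<forall>e\<in>G - {{l, x}, {t, y}}. h e \<noteq> a"
  proof (cases "\<exists>y\<in>neighbors G t. y \<noteq> x \<and> y \<notin> neighbors G x \<and> f {t, y} = y")
    case True
    then obtain y where y: "y \<in> neighbors G t" "y \<noteq> x" "y \<notin> neighbors G x" "f {t, y} = y"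
      by blast
    then have "{t, y} \<in> ?G0" using \<open>t \<noteq> l\<close> \<open>t \<noteq> x\<close> by (auto simp: neighbors_def doubleton_eq_iff)
    then have "\<forall>e\<in>G - {{l, x}, {t, y}}. f e \<noteq> y"
      using f y(4) unfolding orientation_def inj_on_def by blast
    then show ?thesis using that[OF y(1-3) orientation_subset[OF _ f]] by blast
  next
    case False
    obtain y where y: "y \<in> neighbors G t" "y \<noteq> x" "y \<notin> neighbors G x"
      using neighbor_outside_neighborhood[OF g tl \<open>x \<in> neighbors G l\<close>] \<open>t \<noteq> l\<close> \<open>t \<noteq> x\<close> deg
      by blast
    then have "{t, y} \<in> ?G0" using \<open>t \<noteq> l\<close> \<open>t \<noteq> x\<close> by (auto simp: neighbors_def doubleton_eq_iff)
    then have "f {t, y} \<in> {t, y}" using f unfolding orientation_def by blast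
    then have "f {t, y} = t" using False y by auto
    then show ?thesis
      using leaf_switch_out_of_t[OF pf leaf \<open>t \<noteq> l\<close> \<open>t \<noteq> x\<close> deg f y(1,2)] False that[OF y] by blast
  qed
  have "{t, y} \<in> G" "{x, y} \<notin> G" using y by (auto simp: neighbors_def)
  moreover have "y \<noteq> l" using y(1) tl neighbors_sym by blast
  ultimately have "p_switch n G (l, x, t, y)"
    using leaf_switch_pseudoforest[OF pf leaf _ \<open>t \<noteq> l\<close> \<open>t \<noteq> x\<close> _ y(2) _ lt h a free] by blast
  moreover have "{l, t} \<in> two_switch (l, x, t, y) G"
    using calculation by (simp add: p_switch_def two_switch_eq)
  ultimately show ?thesis by blast
qed

lemma p_reachable_leaf_edge:
  assumes "pseudoforest n G" and "neighbors G l = {x}" and "t \<noteq> l" and "degree G x \<le> degree G t"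
  shows "\<exists>G1. p_reachable n G G1 \<and> {l, t} \<in> G1"
proof (cases "{l, t} \<in> G")
  case False
  then obtain A where "p_switch n G A" "{l, t} \<in> two_switch A G"
    using leaf_switch_exists[OF assms(1-3) _ assms(4)] by blast
  then show ?thesis unfolding p_switch_step_def by blast
qed blast

section \<open>Aligning a neighbourhood in a leafless pseudoforest\<close>

lemma leafless_switch_step:
  assumes g: "is_graph n G" and deg2: "\<forall>z. degree G z \<le> 2" and no_leaf: "\<forall>z. degree G z \<noteq> 1"
    and pv: "p \<notin> neighbors G v" and xv: "x \<in> neighbors G v" and "x \<noteq> p" and "v \<noteq> p"
    and "degree G p \<noteq> 0"
  shows "\<exists>A. p_switch n G A \<and> neighbors (two_switch A G) v = insert p (neighbors G v - {x})"
proof -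
  have "degree G p \<le> 2" "degree G p \<noteq> 1" using deg2 no_leaf by blast+
  then have "degree G x \<le> degree G p" using deg2 \<open>degree G p \<noteq> 0\<close> by (metis le_SucE le_zero_eq numeral_2_eq_2 One_nat_def)
  then obtain y where y: "y \<in> neighbors G p" "y \<noteq> x" "y \<notin> neighbors G x"
    using neighbor_outside_neighborhood[OF g pv xv \<open>x \<noteq> p\<close> \<open>v \<noteq> p\<close>] by blast
  have "y \<noteq> v" using y(1) pv neighbors_sym by metis
  have "v \<noteq> x" using xv not_in_neighbors_self[OF g] by blast
  have i: "interchangeable G (v, x, p, y)"
    using xv y pv \<open>y \<noteq> v\<close> \<open>v \<noteq> x\<close> \<open>x \<noteq> p\<close> \<open>v \<noteq> p\<close>
    by (auto simp: interchangeable_def neighbors_def)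
  let ?G' = "two_switch (v, x, p, y) G"
  have "pseudoforest n G" using max_degree_2_pseudoforest[OF g deg2] .
  moreover have "pseudoforest n ?G'"
    using max_degree_2_pseudoforest[OF is_graph_two_switch[OF g]] deg2 degree_two_switch[OF g] by simp
  ultimately have "p_switch n G (v, x, p, y)" using i by (simp add: p_switch_def)
  moreover have "neighbors ?G' v = insert p (neighbors G v - {x})" by (rule neighbors_two_switch[OF g i])
  ultimately show ?thesis by blast
qed

lemma leafless_switch_towards:
  assumes g: "is_graph n G" and deg2: "\<forall>z. degree G z \<le> 2" and no_leaf: "\<forall>z. degree G z \<noteq> 1"
    and gH: "is_graph n H" and deg: "\<forall>z. degree G z = degree H z"
    and p: "p \<in> neighbors H v" "p \<notin> neighbors G v"
  shows "\<exists>A. p_switch n G A \<and>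
    neighbors H v - neighbors (two_switch A G) v = (neighbors H v - neighbors G v) - {p}"
proof -
  have "finite (neighbors H v)" using finite_neighbors is_graph_finite gH by blast
  moreover have "card (neighbors G v) = card (neighbors H v)"
    using deg by (simp add: degree_eq_card_neighbors)
  ultimately have "\<not> neighbors G v \<subseteq> neighbors H v" using p card_subset_eq by metis
  then obtain x where x: "x \<in> neighbors G v" "x \<notin> neighbors H v" by blast
  have "v \<noteq> p" using p(1) not_in_neighbors_self[OF gH] by blast
  have "v \<in> neighbors H p" using p(1) neighbors_sym by metis
  then have "degree G p \<noteq> 0"
    using deg finite_neighbors[OF is_graph_finite[OF gH]] by (auto simp: degree_eq_card_neighbors)
  then obtain A where A: "p_switch n G A"
    and "neighbors (two_switch A G) v = insert p (neighbors G v - {x})"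
    using leafless_switch_step[OF g deg2 no_leaf p(2) x(1) _ \<open>v \<noteq> p\<close>] x(1) p(2) by blast
  then have "neighbors H v - neighbors (two_switch A G) v = (neighbors H v - neighbors G v) - {p}"
    using x(2) by auto
  with A show ?thesis by blast
qed

lemma p_reachable_align_neighbors:
  assumes "is_graph n G" and "\<forall>z. degree G z \<le> 2" and "\<forall>z. degree G z \<noteq> 1"
    and gH: "is_graph n H" and "\<forall>z. degree G z = degree H z"
  shows "\<exists>G1. p_reachable n G G1 \<and> neighbors G1 v = neighbors H v"
  using assms
proof (induction "card (neighbors H v - neighbors G v)" arbitrary: G rule: less_induct)
  case less
  note g = less.prems(1) and deg2 = less.prems(2) and no_leaf = less.prems(3) and deg = less.prems(5)
  show ?case
  proof (cases "neighbors H v \<subseteq> neighbors G v")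
    case True
    have "finite (neighbors G v)" using finite_neighbors is_graph_finite g by blast
    moreover have "card (neighbors H v) = card (neighbors G v)"
      using deg by (simp add: degree_eq_card_neighbors)
    ultimately have "neighbors H v = neighbors G v" using card_subset_eq True by blast
    then show ?thesis by blast
  next
    case False
    then obtain p where p: "p \<in> neighbors H v" "p \<notin> neighbors G v" by blast
    then obtain A where A: "p_switch n G A"
      and diff: "neighbors H v - neighbors (two_switch A G) v = (neighbors H v - neighbors G v) - {p}"
      using leafless_switch_towards[OF g deg2 no_leaf gH deg] by blast
    let ?G' = "two_switch A G"
    have "finite (neighbors H v)" using finite_neighbors is_graph_finite gH by blast
    then have "card ((neighbors H v - neighbors G v) - {p}) < card (neighbors H v - neighbors G v)"
      using p by (intro card_Diff1_less) auto
    then have "card (neighbors H v - neighbors ?G' v) < card (neighbors H v - neighbors G v)"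
      by (simp only: diff)
    moreover have "degree ?G' z = degree G z" for z using degree_two_switch[OF g] .
    ultimately obtain G1 where "p_reachable n ?G' G1" "neighbors G1 v = neighbors H v"
      using less.hyps[of ?G'] is_graph_two_switch[OF g] deg2 no_leaf deg gH by auto
    moreover have "p_switch_step n G ?G'" using A unfolding p_switch_step_def by blast
    ultimately show ?thesis by (meson converse_rtranclp_into_rtranclp)
  qed
qed

section \<open>The induction\<close>

text \<open>The last condition is needed after every switch connecting the two graphs with the star at
  \<open>v\<close> removed; such switches keep all degrees and keep \<open>v\<close> isolated.\<close>

definition detachable_star :: "nat \<Rightarrow> graph \<Rightarrow> graph \<Rightarrow> nat \<Rightarrow> bool" where
  "detachable_star n G H v \<longleftrightarrow> incident_edges G v = incident_edges H v \<and> incident_edges G v \<noteq> {} \<and>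
     (\<forall>K. pseudoforest n K \<longrightarrow> (\<forall>e\<in>K. v \<notin> e) \<longrightarrow>
        (\<forall>z. degree (K \<union> incident_edges G v) z = degree G z) \<longrightarrow>
        pseudoforest n (K \<union> incident_edges G v))"

lemma leaf_detachable_star:
  assumes pfG: "pseudoforest n G" and pfH: "pseudoforest n H" and deg: "\<forall>z. degree G z = degree H z"
    and leaf: "degree G l = 1"
  shows "\<exists>G1 H1. p_reachable n G G1 \<and> p_reachable n H H1 \<and> detachable_star n G1 H1 l"
proof -
  have gG: "is_graph n G" and gH: "is_graph n H" using pfG pfH by (simp_all add: pseudoforest_def)
  obtain x where x: "neighbors G l = {x}"
    using leaf by (metis card_1_singletonE degree_eq_card_neighbors)
  obtain y where y: "neighbors H l = {y}"
    using leaf deg by (metis card_1_singletonE degree_eq_card_neighbors)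
  have "x \<noteq> l" "y \<noteq> l" using x y not_in_neighbors_self gG gH by blast+
  define t where "t = (if degree G x \<le> degree G y then y else x)"
  have "t \<noteq> l" and "degree G x \<le> degree G t" and "degree H y \<le> degree H t"
    using \<open>x \<noteq> l\<close> \<open>y \<noteq> l\<close> deg by (auto simp: t_def)
  then obtain G1 H1 where G1: "p_reachable n G G1" "{l, t} \<in> G1"
    and H1: "p_reachable n H H1" "{l, t} \<in> H1"
    using p_reachable_leaf_edge[OF pfG x] p_reachable_leaf_edge[OF pfH y] by metis
  have pfG1: "pseudoforest n G1" and pfH1: "pseudoforest n H1"
    using p_reachable_pseudoforest G1(1) H1(1) pfG pfH by blast+
  then have gG1: "is_graph n G1" and gH1: "is_graph n H1" by (simp_all add: pseudoforest_def)
  have "degree G1 l = 1" "degree H1 l = 1"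
    using p_reachable_degree[OF G1(1) pfG] p_reachable_degree[OF H1(1) pfH] leaf deg by simp_all
  then have "card (incident_edges G1 l) = 1" "card (incident_edges H1 l) = 1"
    using card_incident_edges gG1 gH1 by simp_all
  moreover have "{l, t} \<in> incident_edges G1 l" "{l, t} \<in> incident_edges H1 l"
    using G1(2) H1(2) by (simp_all add: incident_edges_def)
  ultimately have star: "incident_edges G1 l = {{l, t}}" "incident_edges H1 l = {{l, t}}"
    by (metis card_1_singletonE singletonD)+
  have "l \<in> {1..n}" "t \<in> {1..n}" using is_graph_edgeD[OF gG1 G1(2)] by blast+
  then have "pseudoforest n (K \<union> incident_edges G1 l)" if "pseudoforest n K" "\<forall>e\<in>K. l \<notin> e" for K
    using pseudoforest_insert_pendant[OF that] \<open>t \<noteq> l\<close> star by simp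
  then have "detachable_star n G1 H1 l" using star by (simp add: detachable_star_def)
  then show ?thesis using G1(1) H1(1) by blast
qed

lemma leafless_detachable_star:
  assumes pfG: "pseudoforest n G" and pfH: "pseudoforest n H" and deg: "\<forall>z. degree G z = degree H z"
    and no_leaf: "\<forall>z. degree G z \<noteq> 1" and "G \<noteq> {}"
  shows "\<exists>v G1. p_reachable n G G1 \<and> detachable_star n G1 H v"
proof -
  have gG: "is_graph n G" and gH: "is_graph n H" using pfG pfH by (simp_all add: pseudoforest_def)
  have deg2: "\<forall>z. degree G z \<le> 2" using leafless_pseudoforest_degree_le_2[OF pfG no_leaf] by blast
  obtain e v where "e \<in> G" "v \<in> e" using \<open>G \<noteq> {}\<close> gG unfolding is_graph_def by blast
  then have "incident_edges G v \<noteq> {}" by (auto simp: incident_edges_def)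
  moreover have "finite (incident_edges G v)" using is_graph_finite[OF gG] by (simp add: incident_edges_def)
  ultimately have "card (incident_edges G v) \<noteq> 0" by simp
  then have "degree G v \<noteq> 0" using card_incident_edges[OF gG] by simp
  obtain G1 where G1: "p_reachable n G G1" "neighbors G1 v = neighbors H v"
    using p_reachable_align_neighbors[OF gG deg2 no_leaf gH deg] by blast
  have pfG1: "pseudoforest n G1" using p_reachable_pseudoforest[OF G1(1) pfG] .
  then have gG1: "is_graph n G1" by (simp add: pseudoforest_def)
  have deg1: "degree G1 z = degree G z" for z using p_reachable_degree[OF G1(1) pfG] .
  let ?S = "incident_edges G1 v"
  have "?S = incident_edges H v"
    using G1(2) incident_edges_eq_image[OF gG1] incident_edges_eq_image[OF gH] by simp
  moreover have "?S \<noteq> {}"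
    using card_incident_edges[OF gG1, of v] deg1 \<open>degree G v \<noteq> 0\<close> by auto
  moreover have "pseudoforest n (K \<union> ?S)"
    if "pseudoforest n K" and "\<forall>z. degree (K \<union> ?S) z = degree G1 z" for K
  proof (rule max_degree_2_pseudoforest)
    show "is_graph n (K \<union> ?S)"
      using that(1) is_graph_subset[OF _ gG1] is_graph_Un
      by (auto simp: pseudoforest_def incident_edges_def)
    show "\<forall>z. degree (K \<union> ?S) z \<le> 2" using that(2) deg1 deg2 by simp
  qed
  ultimately have "detachable_star n G1 H v" by (simp add: detachable_star_def)
  then show ?thesis using G1(1) by blast
qed

lemma exists_detachable_star:
  assumes "pseudoforest n G" and "pseudoforest n H" and "\<forall>z. degree G z = degree H z" and "G \<noteq> {}"
  shows "\<exists>v G1 H1. p_reachable n G G1 \<and> p_reachable n H H1 \<and> detachable_star n G1 H1 v"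
proof (cases "\<exists>l. degree G l = 1")
  case True
  then show ?thesis using leaf_detachable_star[OF assms(1-3)] by blast
next
  case False
  then show ?thesis using leafless_detachable_star[OF assms(1-3) _ assms(4)] by blast
qed

lemma p_reachable_of_detachable_star:
  assumes pfG: "pseudoforest n G" and star: "detachable_star n G H v"
    and reduced: "p_reachable n (G - incident_edges G v) (H - incident_edges H v)"
  shows "p_reachable n G H"
proof -
  let ?S = "incident_edges G v"
  have SH: "incident_edges H v = ?S" using star by (simp add: detachable_star_def)
  have gG: "is_graph n G" using pfG by (simp add: pseudoforest_def)
  have S: "\<forall>e\<in>?S. v \<in> e" and G_S: "\<forall>e\<in>G - ?S. v \<notin> e" by (auto simp: incident_edges_def)
  have fin: "finite (G - ?S)" "finite ?S" using is_graph_finite[OF gG] by (auto simp: incident_edges_def)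
  have "pseudoforest n (K \<union> ?S)" if K: "p_reachable n (G - ?S) K" for K
  proof -
    have pf: "pseudoforest n (G - ?S)" using pseudoforest_subset[OF _ pfG] by blast
    then have pfK: "pseudoforest n K" using p_reachable_pseudoforest[OF K] by blast
    have K_v: "\<forall>e\<in>K. v \<notin> e" using p_reachable_isolated[OF K G_S] .
    have finK: "finite K" using pfK is_graph_finite by (auto simp: pseudoforest_def)
    have "degree (K \<union> ?S) z = degree ((G - ?S) \<union> ?S) z" for z
      using degree_Un_disjoint[OF finK fin(2)] degree_Un_disjoint[OF fin] K_v S
        p_reachable_degree[OF K pf] by fastforce
    moreover have "(G - ?S) \<union> ?S = G" by (auto simp: incident_edges_def)
    ultimately have "\<forall>z. degree (K \<union> ?S) z = degree G z" by simp
    then show ?thesis using star pfK K_v unfolding detachable_star_def by blast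
  qed
  from p_reachable_Un[OF reduced[unfolded SH] G_S S this]
  have "p_reachable n ((G - ?S) \<union> ?S) ((H - ?S) \<union> ?S)" .
  moreover have "(G - ?S) \<union> ?S = G" "(H - ?S) \<union> ?S = H"
    using SH by (auto simp: incident_edges_def)
  ultimately show ?thesis by simp
qed

lemma detachable_star_Diff:
  assumes pfG: "pseudoforest n G" and pfH: "pseudoforest n H" and deg: "\<forall>z. degree G z = degree H z"
    and star: "detachable_star n G H v"
  shows "pseudoforest n (G - incident_edges G v)" and "pseudoforest n (H - incident_edges H v)"
    and "\<forall>z. degree (G - incident_edges G v) z = degree (H - incident_edges H v) z"
    and "card (G - incident_edges G v) < card G"
proof -
  let ?S = "incident_edges G v"
  have SH: "incident_edges H v = ?S" and "?S \<noteq> {}" using star unfolding detachable_star_def by blast+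
  have fin: "finite G" "finite H" using pfG pfH is_graph_finite by (auto simp: pseudoforest_def)
  have sub: "?S \<subseteq> G" "?S \<subseteq> H" using SH by (auto simp: incident_edges_def)
  show "pseudoforest n (G - ?S)" "pseudoforest n (H - incident_edges H v)"
    using pseudoforest_subset pfG pfH by blast+
  show "\<forall>z. degree (G - ?S) z = degree (H - incident_edges H v) z"
    using degree_Diff[OF fin(1) sub(1)] degree_Diff[OF fin(2) sub(2)] deg SH by simp
  show "card (G - ?S) < card G"
    using psubset_card_mono[OF fin(1)] sub(1) \<open>?S \<noteq> {}\<close> by blast
qed

theorem p_reachable_if_degree_eq:
  assumes "pseudoforest n G" and "pseudoforest n H" and "\<forall>z. degree G z = degree H z"
  shows "p_reachable n G H"
  using assms
proof (induction "card G" arbitrary: G H rule: less_induct)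
  case less
  note pfG = less.prems(1) and pfH = less.prems(2) and deg = less.prems(3)
  have gG: "is_graph n G" and gH: "is_graph n H" using pfG pfH by (simp_all add: pseudoforest_def)
  show ?case
  proof (cases "G = {}")
    case True
    then have "H = {}" using card_eq_if_degree_eq[OF gG gH deg] is_graph_finite[OF gH] by simp
    with True show ?thesis by simp
  next
    case False
    then obtain v G1 H1 where G1: "p_reachable n G G1" and H1: "p_reachable n H H1"
      and star: "detachable_star n G1 H1 v"
      using exists_detachable_star[OF pfG pfH deg] by blast
    have pf1: "pseudoforest n G1" "pseudoforest n H1"
      using p_reachable_pseudoforest G1 H1 pfG pfH by blast+
    have deg1: "\<forall>z. degree G1 z = degree H1 z"
      using p_reachable_degree[OF G1 pfG] p_reachable_degree[OF H1 pfH] deg by simp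
    have "is_graph n G1" using pf1(1) by (simp add: pseudoforest_def)
    then have "card G1 = card G"
      using card_eq_if_degree_eq[OF _ gG] p_reachable_degree[OF G1 pfG] by blast
    then have "p_reachable n (G1 - incident_edges G1 v) (H1 - incident_edges H1 v)"
      using less.hyps detachable_star_Diff[OF pf1 deg1 star] by simp
    then have "p_reachable n G1 H1" by (rule p_reachable_of_detachable_star[OF pf1(1) star])
    then show ?thesis using G1 p_reachable_sym[OF H1] by (meson rtranclp_trans)
  qed
qed

lemma degree_eq_if_deg_seq_eq:
  assumes "is_graph n G" and "is_graph n H" and "deg_seq n G = deg_seq n H"
  shows "degree G z = degree H z"
proof (cases "z \<in> {1..n}")
  case True
  then have "z \<in> set [1..<n + 1]" by auto
  then show ?thesis using assms(3) unfolding deg_seq_def map_eq_conv by blast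
qed (use assms degree_outside in metis)

theorem theorem5p7:
  fixes s :: "nat list" and G H :: graph
  assumes "G \<in> Pset s" and "H \<in> Pset s"
  shows "\<exists>ts :: (nat \<times> nat \<times> nat \<times> nat) list. \<exists>Gs :: graph list.
           length Gs = length ts + 1 \<and> Gs ! 0 = G \<and> Gs ! length ts = H \<and>
           (\<forall>i < length ts. p_switch (length s) (Gs ! i) (ts ! i) \<and>
                            Gs ! (i + 1) = two_switch (ts ! i) (Gs ! i))"
proof -
  have pf: "pseudoforest (length s) G" "pseudoforest (length s) H"
    and seq: "deg_seq (length s) G = deg_seq (length s) H"
    using assms by (simp_all add: Pset_def)
  then have "is_graph (length s) G" "is_graph (length s) H" by (simp_all add: pseudoforest_def)
  then have "\<forall>z. degree G z = degree H z" using degree_eq_if_deg_seq_eq seq by blast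
  with pf have "p_reachable (length s) G H" by (rule p_reachable_if_degree_eq)
  then show ?thesis by (rule p_reachable_switch_sequence)
qed

end
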